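(* Let $\Phi\in\mathbb T$ be irrational, $\lambda_1\in(0,1]$, $\lambda_2\in[0,1]$ and $z\in\mathbb C\setminus\{0\}$. Then $$L_{\lambda_1,\lambda_2,\Phi}(z)\ge\log\left[\frac{\lambda_2(1+\lambda_1')}{\lambda_1(1+\lambda_2')}\right].$$ In particular $L_{\lambda_1,\lambda_2,\Phi}(z)>0$ for all $z\in\partial\mathbb D$ whenever $0<\lambda_1<\lambda_2\le1$, and for every $\lambda_2\in(0,1]$ and $z\in\partial\mathbb D$, $\lim_{\lambda_1\downarrow0}L_{\lambda_1,\lambda_2,\Phi}(z)=\infty$.
   Context: For $\lambda\in[0,1]$ put $\lambda'=\sqrt{1-\lambda^2}$; $\mathbb T=\mathbb R/\mathbb Z$, $\partial\mathbb D$ the unit circle. Writing $\mathrm c(\theta)=\cos(2\pi\theta)$, $\mathrm s(\theta)=\sin(2\pi\theta)$, for $\lambda_1\in(0,1]$, $\lambda_2\in[0,1]$, $z\in\mathbb C\setminus\{0\}$ define $$A_{\lambda_1,\lambda_2,z}(\theta)=\frac{1}{\lambda_2\mathrm c(\theta)-i\lambda_2'}\begin{bmatrix}\lambda_1^{-1}z^{-1}+2\lambda_1'\lambda_1^{-1}\lambda_2\mathrm s(\theta)+z\lambda_1'^2\lambda_1^{-1} & -\lambda_2\mathrm s(\theta)-\lambda_1'z\\ -\lambda_2\mathrm s(\theta)-\lambda_1'z & \lambda_1 z\end{bmatrix}$$ (the transfer matrix cocycle of the unitary almost-Mathieu operator), its iterates $A^n(\theta)=A(\theta+(n-1)\Phi)\cdots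 A(\theta+\Phi)A(\theta)$, and $L_{\lambda_1,\lambda_2,\Phi}(z)=\lim_{n\to\infty}\frac1n\int_{\mathbb T}\log\|A^n_{\lambda_1,\lambda_2,z}(\theta)\|d\theta$. (The right-hand side of the inequality is interpreted as $-\infty$ when $\lambda_2=0$.) *)

theory Defs
  imports "HOL-Analysis.Analysis"
begin

definition lprime :: "real \<Rightarrow> real" where
  "lprime lam = sqrt (1 - lam\<^sup>2)"

definition cc :: "real \<Rightarrow> real" where "cc \<theta> = cos (2 * pi * \<theta>)"
definition ss :: "real \<Rightarrow> real" where "ss \<theta> = sin (2 * pi * \<theta>)"

text \<open>The transfer-matrix cocycle of the unitary almost-Mathieu operator
  (angles in T = R/Z represented by real numbers; all functions are 1-periodic).\<close>
definition UAMO_A :: "real \<Rightarrow> real \<Rightarrow> complex \<Rightarrow> real \<Rightarrow> complex^2^2" where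
  "UAMO_A l1 l2 z \<theta> =
     (let d = complex_of_real (l2 * cc \<theta>) - \<i> * complex_of_real (lprime l2);
          a = inverse (complex_of_real l1) * inverse z
              + complex_of_real (2 * lprime l1 / l1 * l2 * ss \<theta>)
              + z * complex_of_real ((lprime l1)\<^sup>2 / l1);
          b = - complex_of_real (l2 * ss \<theta>) - complex_of_real (lprime l1) * z;
          e = complex_of_real l1 * z
      in (\<chi> i j. (if i = 1 then (if j = 1 then a else b) else (if j = 1 then b else e)) / d))"

fun UAMO_iter :: "real \<Rightarrow> real \<Rightarrow> real \<Rightarrow> complex \<Rightarrow> nat \<Rightarrow> real \<Rightarrow> complex^2^2" where
  "UAMO_iter l1 l2 \<Phi> z 0 \<theta> = mat 1"
| "UAMO_iter l1 l2 \<Phi> z (Suc n) \<theta> =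
     UAMO_A l1 l2 z (\<theta> + real n * \<Phi>) ** UAMO_iter l1 l2 \<Phi> z n \<theta>"

definition mnorm :: "complex^2^2 \<Rightarrow> real" where
  "mnorm M = onorm (\<lambda>v. M *v v)"

definition lyap :: "real \<Rightarrow> real \<Rightarrow> real \<Rightarrow> complex \<Rightarrow> real" where
  "lyap l1 l2 \<Phi> z =
     lim (\<lambda>n. (1 / real n) *
        (LINT \<theta>:{0..1}|lborel. ln (mnorm (UAMO_iter l1 l2 \<Phi> z n \<theta>))))"

end

theory Submission
  imports Defs "HOL-Complex_Analysis.Cauchy_Integral_Formula"
begin

text \<open>
  With \<open>w = e(\<theta>) = exp(2\<pi>i\<theta>)\<close>, clearing denominators writes \<open>A(\<theta>) = M(w) / q(w)\<close> with a
  polynomial matrix \<open>M\<close> and a quadratic \<open>q\<close> with \<open>q(w) = w(\<lambda>\<^sub>2 c(\<theta>) - i\<lambda>\<^sub>2')\<close>, so that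
  \<open>A\<^sup>n(\<theta>) = P\<^sub>n(w) / (\<Prod>k<n. q(e(\<theta> + k\<Phi>)))\<close> for a polynomial matrix \<open>P\<^sub>n\<close>.
  Jensen's formula gives \<open>\<integral> ln |q(c e(\<theta>))| d\<theta> = ln ((1 + \<lambda>\<^sub>2')/2)\<close> for \<open>|c| = 1\<close>, and Jensen's
  inequality \<open>\<integral> ln |p(e(\<theta>))| d\<theta> \<ge> ln |p(0)|\<close> applies to the numerator. Since
  \<open>P\<^sub>n(0) = M(0)\<^sup>n\<close> has the eigenvalue \<open>\<mu> = i\<lambda>\<^sub>2(1 + \<lambda>\<^sub>1')/(2\<lambda>\<^sub>1)\<close>, testing \<open>A\<^sup>n\<close> on the
  corresponding eigenvector yields \<open>\<integral> ln \<parallel>A\<^sup>n\<parallel> \<ge> n (ln |\<mu>| - ln ((1 + \<lambda>\<^sub>2')/2)) - O(1)\<close>.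
  These integrals are subadditive in \<open>n\<close> because Lebesgue measure on the circle is invariant
  under the rotation by \<open>\<Phi>\<close>, so by Fekete's lemma the limit defining the Lyapunov exponent exists
  and is at least \<open>ln |\<mu>| - ln ((1 + \<lambda>\<^sub>2')/2)\<close>, which is the claimed bound.
\<close>

section \<open>Means of logarithms over the unit circle\<close>

definition ecirc :: "real \<Rightarrow> complex" where
  "ecirc t = exp (2 * of_real pi * \<i> * of_real t)"

lemma norm_ecirc [simp]: "cmod (ecirc t) = 1"
  unfolding ecirc_def by (simp add: norm_exp_eq_Re)

lemma ecirc_nonzero [simp]: "ecirc t \<noteq> 0"
  unfolding ecirc_def by simp

lemma continuous_on_ecirc [continuous_intros]: "continuous_on S ecirc"
  unfolding ecirc_def by (intro continuous_intros)

lemma borel_measurable_ecirc [measurable]: "ecirc \<in> borel_measurable borel"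
  by (intro borel_measurable_continuous_onI continuous_on_ecirc)

lemma ecirc_add: "ecirc (s + t) = ecirc s * ecirc t"
  unfolding ecirc_def by (simp add: distrib_left exp_add)

lemma ecirc_add_1: "ecirc (t + 1) = ecirc t"
proof -
  have "ecirc 1 = 1" unfolding ecirc_def by (simp add: exp_eq_1)
  thus ?thesis by (simp add: ecirc_add)
qed

lemma ecirc_add_nat_mult: "ecirc (t + real k * p) = ecirc t * ecirc p ^ k"
proof -
  have "ecirc (real k * p) = ecirc p ^ k"
    unfolding ecirc_def by (simp add: exp_of_nat_mult[symmetric] mult_ac)
  thus ?thesis by (simp add: ecirc_add)
qed

lemma ecirc_eq_cc_ss: "ecirc t = of_real (cc t) + \<i> * of_real (ss t)"
proof -
  have "ecirc t = cis (2 * pi * t)" unfolding ecirc_def by (simp add: cis_conv_exp mult_ac)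
  thus ?thesis unfolding cc_def ss_def by (simp add: cis.ctr complex_eq_iff)
qed

lemma ecirc_eq_ecirc_iff: "ecirc s = ecirc t \<longleftrightarrow> (\<exists>n::int. s = t + of_int n)"
proof
  assume "ecirc s = ecirc t"
  then obtain n :: int where
    "2 * of_real pi * \<i> * of_real s = 2 * of_real pi * \<i> * of_real t + (of_int (2 * n) * pi) * \<i>"
    unfolding ecirc_def exp_eq by blast
  hence "Im (2 * of_real pi * \<i> * of_real s) = Im (2 * of_real pi * \<i> * of_real t + (of_int (2 * n) * pi) * \<i>)"
    by simp
  hence "pi * s = pi * (t + of_int n)" by (simp add: algebra_simps)
  thus "\<exists>n::int. s = t + of_int n" by auto
next
  assume "\<exists>n::int. s = t + of_int n"
  then obtain n :: int where "s = t + of_int n" by blast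
  thus "ecirc s = ecirc t"
    unfolding ecirc_def by (simp add: distrib_left exp_add exp_eq_1)
qed

lemma AE_ecirc_neq: "AE t in lborel. ecirc t \<noteq> a"
proof (cases "\<exists>t0. ecirc t0 = a")
  case True
  then obtain t0 where t0: "ecirc t0 = a" by blast
  have "{t. ecirc t = a} \<subseteq> range (\<lambda>n::int. t0 + of_int n)"
    using t0 by (auto simp: ecirc_eq_ecirc_iff)
  hence "countable {t. ecirc t = a}" by (rule countable_subset) simp
  hence "{t. ecirc t = a} \<in> null_sets lborel" by (rule countable_imp_null_set_lborel)
  thus ?thesis by (rule AE_I') auto
qed auto

lemma AE_poly_ecirc_nonzero:
  fixes p :: "complex poly"
  assumes "p \<noteq> 0"
  shows "AE t in lborel. poly p (ecirc t) \<noteq> 0"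
proof -
  have "finite {x. poly p x = 0}" by (rule poly_roots_finite[OF assms])
  hence "AE t in lborel. \<forall>r\<in>{x. poly p x = 0}. ecirc t \<noteq> r"
    by (intro AE_finite_allI) (auto simp: AE_ecirc_neq)
  thus ?thesis by eventually_elim auto
qed

lemma circle_mean_holomorphic:
  assumes hol: "f holomorphic_on ball 0 R" and R: "R > 1"
  shows "((\<lambda>t. f (ecirc t)) has_integral f 0) {0..1}"
proof -
  have cb: "cball 0 1 \<subseteq> ball (0::complex) R" using R by auto
  have "((\<lambda>u. f u / (u - 0)) has_contour_integral (2 * of_real pi * \<i> * f 0)) (circlepath 0 1)"
  proof (rule Cauchy_integral_circlepath)
    show "continuous_on (cball 0 1) f"
      using cb hol holomorphic_on_imp_continuous_on holomorphic_on_subset by blast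
    show "f holomorphic_on ball 0 1"
      using cb hol holomorphic_on_subset ball_subset_cball by blast
  qed auto
  hence "((\<lambda>t. f (ecirc t) / ecirc t * (2 * pi * \<i> * 1 * ecirc t)) has_integral (2 * of_real pi * \<i> * f 0)) {0..1}"
    unfolding has_contour_integral_def
    by (rule has_integral_eq[rotated])
       (simp add: vector_derivative_circlepath01 del: circlepath, simp add: circlepath ecirc_def)
  hence "((\<lambda>t. (2 * of_real pi * \<i>) * f (ecirc t)) has_integral (2 * of_real pi * \<i>) * f 0) {0..1}"
    by (rule has_integral_eq[rotated]) simp
  hence "((\<lambda>t. inverse (2 * of_real pi * \<i>) * ((2 * of_real pi * \<i>) * f (ecirc t)))
           has_integral inverse (2 * of_real pi * \<i>) * ((2 * of_real pi * \<i>) * f 0)) {0..1}"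
    by (rule has_integral_mult_right)
  moreover have "inverse (2 * of_real pi * \<i>) * ((2 * of_real pi * \<i>) * y) = y" for y :: complex
    by (simp add: field_simps)
  ultimately show ?thesis by simp
qed

lemma set_integrable_const_unit_interval:
  "set_integrable lborel {0..1::real} (\<lambda>_. c :: real)"
  by (rule borel_integrable_atLeastAtMost') (rule continuous_on_const)

lemma set_integral_const_unit_interval [simp]: "(LINT t:{0..1::real}|lborel. c) = (c :: real)"
  using set_integral_const[of "{0..1::real}" lborel c] by simp

lemma circle_mean_ln_norm_one_minus:
  fixes b :: complex
  assumes b: "cmod b < 1"
  shows "set_integrable lborel {0..1} (\<lambda>t. ln (cmod (1 - b * ecirc t)))"
    and "(LINT t:{0..1}|lborel. ln (cmod (1 - b * ecirc t))) = 0"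
proof -
  define R where "R = 2 / (1 + cmod b)"
  have R1: "R > 1" and bR: "cmod b * R < 1"
    using b unfolding R_def by (simp_all add: field_simps add_pos_nonneg)
  have "1 - b * w \<notin> \<real>\<^sub>\<le>\<^sub>0" if "w \<in> ball 0 R" for w
  proof -
    have "cmod (b * w) \<le> cmod b * R"
      using that by (simp add: norm_mult mult_left_mono less_imp_le)
    hence "cmod (b * w) < 1" using bR by simp
    hence "Re (b * w) < 1" using complex_Re_le_cmod le_less_trans by blast
    thus ?thesis by (auto simp: complex_nonpos_Reals_iff)
  qed
  hence hol: "(\<lambda>w. Ln (1 - b * w)) holomorphic_on ball 0 R"
    by (intro holomorphic_intros) auto
  have nz: "1 - b * ecirc t \<noteq> 0" for t
    using b by (metis norm_ecirc mult.commute mult_cancel_left1 norm_mult right_minus_eq less_irrefl)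
  from has_integral_linear[OF circle_mean_holomorphic[OF hol R1] bounded_linear_Re]
  have mean: "((\<lambda>t. ln (cmod (1 - b * ecirc t))) has_integral 0) {0..1}"
    using nz by (simp add: o_def)
  have "continuous_on {0..1} (\<lambda>t. ln (cmod (1 - b * ecirc t)))"
    using nz by (intro continuous_intros) auto
  thus si: "set_integrable lborel {0..1} (\<lambda>t. ln (cmod (1 - b * ecirc t)))"
    by (rule borel_integrable_atLeastAtMost')
  show "(LINT t:{0..1}|lborel. ln (cmod (1 - b * ecirc t))) = 0"
    using set_borel_integral_eq_integral(2)[OF si] mean integral_unique by metis
qed

lemma norm_diff_unit_eq:
  assumes "cmod e = 1" shows "cmod (e - c) = cmod (1 - cnj c * e)"
proof -
  have "e * cnj e = 1" using assms complex_norm_square[of e] by simp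
  hence "e * (1 - c * cnj e) = e - c" by (simp add: algebra_simps)
  hence "cmod (e - c) = cmod (1 - c * cnj e)" using assms by (metis norm_mult mult_1)
  also have "\<dots> = cmod (1 - cnj c * e)" by (metis complex_cnj_cnj complex_cnj_diff
        complex_cnj_mult complex_cnj_one complex_mod_cnj)
  finally show ?thesis .
qed

lemma circle_mean_ln_norm_minus_inside:
  fixes a :: complex
  assumes "cmod a < 1"
  shows "set_integrable lborel {0..1} (\<lambda>t. ln (cmod (ecirc t - a)))"
    and "(LINT t:{0..1}|lborel. ln (cmod (ecirc t - a))) = 0"
proof -
  have eq: "(\<lambda>t. ln (cmod (ecirc t - a))) = (\<lambda>t. ln (cmod (1 - cnj a * ecirc t)))"
    by (intro ext, subst norm_diff_unit_eq) simp_all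
  show "set_integrable lborel {0..1} (\<lambda>t. ln (cmod (ecirc t - a)))"
    "(LINT t:{0..1}|lborel. ln (cmod (ecirc t - a))) = 0"
    unfolding eq using circle_mean_ln_norm_one_minus[of "cnj a"] assms by simp_all
qed

lemma reverse_fatou_nn_integral_le:
  fixes f :: "nat \<Rightarrow> real \<Rightarrow> real" and g :: "real \<Rightarrow> real"
  assumes fi: "\<And>k. set_integrable lborel {0..1} (f k)"
    and fC: "\<And>k t. t \<in> {0..1} \<Longrightarrow> f k t \<le> C"
    and fc: "\<And>k. (LINT t:{0..1}|lborel. f k t) \<ge> c"
    and lim: "AE t in lborel. t \<in> {0..1} \<longrightarrow> (\<lambda>k. f k t) \<longlonglongrightarrow> g t"
  shows "(\<integral>\<^sup>+t. ennreal (indicator {0..1} t * (C - g t)) \<partial>lborel) \<le> ennreal (C - c)"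
proof -
  define h where "h k t = indicator {0..1} t * (C - f k t)" for k t
  have hint: "integrable lborel (h k)" for k
    using set_integrable_const_unit_interval[of C] fi[of k]
    unfolding set_integrable_def h_def by (simp add: right_diff_distrib)
  have [measurable]: "h k \<in> borel_measurable lborel" for k using hint by (rule borel_measurable_integrable)
  have "integral\<^sup>L lborel (h k) = C - (LINT t:{0..1}|lborel. f k t)" for k
    using set_integral_diff(2)[OF set_integrable_const_unit_interval fi[of k]]
    unfolding set_lebesgue_integral_def h_def by simp
  moreover have "0 \<le> h k t" for k t using fC[of t k] unfolding h_def by (auto simp: indicator_def)
  ultimately have le1: "(\<integral>\<^sup>+t. ennreal (h k t) \<partial>lborel) \<le> ennreal (C - c)" for k
    using nn_integral_eq_integral[OF hint] fc[of k] by (simp add: ennreal_leI)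
  have "AE t in lborel. liminf (\<lambda>k. ennreal (h k t)) = ennreal (indicator {0..1} t * (C - g t))"
    using lim
  proof eventually_elim
    case (elim t)
    show ?case
    proof (cases "t \<in> {0..1}")
      case True
      hence "(\<lambda>k. ennreal (h k t)) \<longlonglongrightarrow> ennreal (indicator {0..1} t * (C - g t))"
        unfolding h_def using elim by (intro tendsto_ennrealI tendsto_intros) auto
      thus ?thesis by (simp add: lim_imp_Liminf)
    qed (simp add: h_def Liminf_const)
  qed
  hence "(\<integral>\<^sup>+t. ennreal (indicator {0..1} t * (C - g t)) \<partial>lborel)
      = (\<integral>\<^sup>+t. liminf (\<lambda>k. ennreal (h k t)) \<partial>lborel)"
    by (intro nn_integral_cong_AE) (auto elim: eventually_mono)
  also have "\<dots> \<le> liminf (\<lambda>k. \<integral>\<^sup>+t. ennreal (h k t) \<partial>lborel)"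
    by (rule nn_integral_liminf) measurable
  also have "\<dots> \<le> limsup (\<lambda>k. \<integral>\<^sup>+t. ennreal (h k t) \<partial>lborel)"
    by (rule Liminf_le_Limsup) simp
  also have "\<dots> \<le> ennreal (C - c)"
    by (rule Limsup_bounded) (simp add: le1)
  finally show ?thesis .
qed

lemma reverse_fatou_unit_interval:
  fixes f :: "nat \<Rightarrow> real \<Rightarrow> real" and g :: "real \<Rightarrow> real"
  assumes fi: "\<And>k. set_integrable lborel {0..1} (f k)"
    and fC: "\<And>k t. t \<in> {0..1} \<Longrightarrow> f k t \<le> C"
    and fc: "\<And>k. (LINT t:{0..1}|lborel. f k t) \<ge> c"
    and lim: "AE t in lborel. t \<in> {0..1} \<longrightarrow> (\<lambda>k. f k t) \<longlonglongrightarrow> g t"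
    and gm [measurable]: "g \<in> borel_measurable borel"
  shows "set_integrable lborel {0..1} g" "(LINT t:{0..1}|lborel. g t) \<ge> c"
proof -
  define A :: "real set" where "A = {0..1}"
  define H where "H t = indicator A t * (C - g t)" for t
  have Hm [measurable]: "H \<in> borel_measurable lborel" unfolding H_def A_def by measurable
  have Hle: "(\<integral>\<^sup>+t. ennreal (H t) \<partial>lborel) \<le> ennreal (C - c)"
    unfolding H_def A_def by (rule reverse_fatou_nn_integral_le[OF fi fC fc lim])
  have Hnn: "AE t in lborel. 0 \<le> H t"
    using lim
  proof eventually_elim
    case (elim t)
    show ?case
    proof (cases "t \<in> {0..1}")
      case True
      hence "g t \<le> C" using elim fC by (intro LIMSEQ_le_const2[of "\<lambda>k. f k t"]) auto
      thus ?thesis using True by (simp add: H_def A_def)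
    qed (simp add: H_def A_def)
  qed
  have Hint: "integrable lborel H"
    by (rule integrableI_nonneg[OF Hm Hnn]) (use Hle in \<open>auto simp: top_unique less_top[symmetric] intro: le_less_trans\<close>)
  have "c \<le> C"
    using fc[of 0] set_integral_mono[OF fi set_integrable_const_unit_interval, of 0 C] fC by force
  hence HI: "integral\<^sup>L lborel H \<le> C - c"
    using nn_integral_eq_integral[OF Hint Hnn] Hle by (simp add: ennreal_le_iff)
  have ceq: "(\<lambda>t. indicator A t *\<^sub>R g t) = (\<lambda>t. indicator A t *\<^sub>R C - H t)"
    unfolding H_def by (auto simp: indicator_def)
  have ci: "integrable lborel (\<lambda>t. indicator A t *\<^sub>R C)"
    using set_integrable_const_unit_interval unfolding set_integrable_def A_def .
  show "set_integrable lborel {0..1} g"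
    unfolding set_integrable_def A_def[symmetric] ceq using ci Hint by (rule Bochner_Integration.integrable_diff)
  have "(LINT t:{0..1}|lborel. g t) = integral\<^sup>L lborel (\<lambda>t. indicator A t *\<^sub>R C) - integral\<^sup>L lborel H"
    unfolding set_lebesgue_integral_def A_def[symmetric] ceq using ci Hint by (rule Bochner_Integration.integral_diff)
  also have "integral\<^sup>L lborel (\<lambda>t. indicator A t *\<^sub>R C) = C"
    using set_integral_const_unit_interval[of C] unfolding set_lebesgue_integral_def A_def .
  finally show "(LINT t:{0..1}|lborel. g t) \<ge> c" using HI by simp
qed

lemma circle_mean_ln_norm_unit_ge:
  fixes a :: complex
  assumes a: "cmod a = 1"
  shows "set_integrable lborel {0..1} (\<lambda>t. ln (cmod (ecirc t - a)))"
    and "(LINT t:{0..1}|lborel. ln (cmod (ecirc t - a))) \<ge> 0"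
proof -
  define \<rho> :: "nat \<Rightarrow> real" where "\<rho> k = 1 - 1 / (real k + 2)" for k
  have \<rho>01: "0 \<le> \<rho> k" "\<rho> k < 1" for k unfolding \<rho>_def by (auto simp: field_simps)
  have "(\<lambda>k. 1 / (real k + 2)) \<longlonglongrightarrow> 0"
    using LIMSEQ_ignore_initial_segment[OF lim_const_over_n[of 1], of 2] by (simp add: add.commute)
  hence \<rho>lim: "\<rho> \<longlonglongrightarrow> 1" unfolding \<rho>_def using tendsto_diff[OF tendsto_const] by fastforce
  let ?f = "\<lambda>k t. ln (cmod (ecirc t - of_real (\<rho> k) * a))"
  have inside: "cmod (of_real (\<rho> k) * a) < 1" for k using \<rho>01[of k] a by (simp add: norm_mult)
  have "?f k t \<le> ln 2" for k t
  proof -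
    have "ecirc t \<noteq> of_real (\<rho> k) * a" by (metis inside less_irrefl norm_ecirc)
    moreover have "cmod (ecirc t - of_real (\<rho> k) * a) \<le> 2"
      using norm_triangle_ineq4[of "ecirc t" "of_real (\<rho> k) * a"] inside[of k] by simp
    ultimately show ?thesis by simp
  qed
  moreover have "AE t in lborel. t \<in> {0..1} \<longrightarrow> (\<lambda>k. ?f k t) \<longlonglongrightarrow> ln (cmod (ecirc t - a))"
    using AE_ecirc_neq[of a]
  proof eventually_elim
    case (elim t)
    have "(\<lambda>k. ecirc t - of_real (\<rho> k) * a) \<longlonglongrightarrow> ecirc t - of_real 1 * a"
      by (intro tendsto_intros \<rho>lim)
    hence "(\<lambda>k. ln (cmod (ecirc t - of_real (\<rho> k) * a))) \<longlonglongrightarrow> ln (cmod (ecirc t - of_real 1 * a))"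
      using elim by (intro tendsto_intros) (auto intro: \<rho>lim)
    thus ?case by simp
  qed
  ultimately show "set_integrable lborel {0..1} (\<lambda>t. ln (cmod (ecirc t - a)))"
    and "(LINT t:{0..1}|lborel. ln (cmod (ecirc t - a))) \<ge> 0"
    using reverse_fatou_unit_interval[of ?f "ln 2" 0] circle_mean_ln_norm_minus_inside[OF inside]
    by auto
qed

lemma norm_diff_unit_le_radial:
  assumes e: "cmod e = 1" and a: "cmod a = 1" and r: "0 \<le> r" "r \<le> 1"
  shows "(1 + r) * cmod (e - a) \<le> 2 * cmod (e - r * a)"
proof -
  have e2: "(Re e)^2 + (Im e)^2 = 1" using e by (simp add: cmod_def)
  have a2: "(Re a)^2 + (Im a)^2 = 1" using a by (simp add: cmod_def)
  define x where "x = Re e * Re a + Im e * Im a"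
  have n1: "(cmod (e - a))^2 = 2 - 2 * x" unfolding cmod_power2 x_def using e2 a2
    by (simp add: power2_eq_square algebra_simps)
  have "(cmod (e - r * a))^2 = ((Re e)^2 + (Im e)^2) + r^2*((Re a)^2+(Im a)^2) - 2*r*x"
    unfolding cmod_power2 x_def by (simp add: power2_eq_square algebra_simps)
  hence n2: "(cmod (e - r * a))^2 = 1 + r^2 - 2 * r * x" using e2 a2 by simp
  have "(Re e + Re a)^2 + (Im e + Im a)^2 \<ge> 0" by simp
  hence "x \<ge> -1" using e2 a2 unfolding x_def by (simp add: power2_eq_square algebra_simps)
  hence "0 \<le> 2 * (1 - r)^2 * (1 + x)" by simp
  also have "\<dots> = 2\<^sup>2 * (1 + r\<^sup>2 - 2 * r * x) - (1 + r)\<^sup>2 * (2 - 2 * x)"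
    by (simp add: power2_eq_square algebra_simps)
  finally have "((1 + r) * cmod (e - a))^2 \<le> (2 * cmod (e - r * a))^2"
    unfolding power_mult_distrib n1 n2 by simp
  thus ?thesis by (rule power2_le_imp_le) simp
qed

lemma circle_mean_ln_norm_unit_le:
  fixes a :: complex
  assumes a: "cmod a = 1" and r: "0 < r" "r < 1"
  shows "(LINT t:{0..1}|lborel. ln (cmod (ecirc t - a))) \<le> ln (2 / (1 + r))"
proof -
  have inside: "cmod (of_real r * a) < 1" using r a by (simp add: norm_mult)
  have "(LINT t:{0..1}|lborel. ln (cmod (ecirc t - a)))
      \<le> (LINT t:{0..1}|lborel. ln (2 / (1 + r)) + ln (cmod (ecirc t - of_real r * a)))"
  proof (rule set_integral_mono_AE)
    show "set_integrable lborel {0..1} (\<lambda>t. ln (cmod (ecirc t - a)))"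
      by (rule circle_mean_ln_norm_unit_ge(1)[OF a])
    show "set_integrable lborel {0..1} (\<lambda>t. ln (2 / (1 + r)) + ln (cmod (ecirc t - of_real r * a)))"
      using set_integrable_const_unit_interval circle_mean_ln_norm_minus_inside(1)[OF inside] by auto
    show "AE t\<in>{0..1} in lborel. ln (cmod (ecirc t - a)) \<le> ln (2 / (1 + r)) + ln (cmod (ecirc t - of_real r * a))"
      using AE_ecirc_neq[of a]
    proof eventually_elim
      case (elim t)
      have ne: "ecirc t - of_real r * a \<noteq> 0" by (metis inside eq_iff_diff_eq_0 less_irrefl norm_ecirc)
      have "cmod (ecirc t - a) \<le> (2 / (1 + r)) * cmod (ecirc t - of_real r * a)"
        using norm_diff_unit_le_radial[of "ecirc t" a r] r a by (simp add: field_simps)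
      hence "ln (cmod (ecirc t - a)) \<le> ln ((2 / (1 + r)) * cmod (ecirc t - of_real r * a))"
        using elim r by (intro ln_mono) auto
      also have "\<dots> = ln (2 / (1 + r)) + ln (cmod (ecirc t - of_real r * a))"
        using ne r by (intro ln_mult_pos) auto
      finally show ?case by simp
    qed
  qed
  also have "\<dots> = ln (2 / (1 + r))"
    using set_integral_add(2)[OF set_integrable_const_unit_interval circle_mean_ln_norm_minus_inside(1)[OF inside]]
      circle_mean_ln_norm_minus_inside(2)[OF inside] by simp
  finally show ?thesis .
qed

lemma circle_mean_ln_norm_unit:
  fixes a :: complex
  assumes a: "cmod a = 1"
  shows "(LINT t:{0..1}|lborel. ln (cmod (ecirc t - a))) = 0"
proof (rule antisym)
  have "((\<lambda>r. ln (2 / (1 + r))) \<longlongrightarrow> ln (2 / (1 + 1))) (at_left (1::real))"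
    by (intro tendsto_intros) auto
  moreover have "eventually (\<lambda>r. (LINT t:{0..1}|lborel. ln (cmod (ecirc t - a))) \<le> ln (2 / (1 + r)))
                   (at_left (1::real))"
    using eventually_at_left_real[OF zero_less_one] by eventually_elim (use circle_mean_ln_norm_unit_le[OF a] in auto)
  ultimately show "(LINT t:{0..1}|lborel. ln (cmod (ecirc t - a))) \<le> 0"
    using tendsto_le[OF trivial_limit_at_left_real _ tendsto_const] by fastforce
qed (rule circle_mean_ln_norm_unit_ge(2)[OF a])

lemma circle_mean_ln_norm_minus:
  fixes a :: complex
  shows "set_integrable lborel {0..1} (\<lambda>t. ln (cmod (ecirc t - a)))"
    and "(LINT t:{0..1}|lborel. ln (cmod (ecirc t - a))) = ln (max 1 (cmod a))"
proof -
  consider "cmod a < 1" | "cmod a = 1" | "cmod a > 1" by linarith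
  hence "set_integrable lborel {0..1} (\<lambda>t. ln (cmod (ecirc t - a))) \<and>
        (LINT t:{0..1}|lborel. ln (cmod (ecirc t - a))) = ln (max 1 (cmod a))"
  proof cases
    case 1 thus ?thesis using circle_mean_ln_norm_minus_inside by simp
  next
    case 2 thus ?thesis using circle_mean_ln_norm_unit_ge(1) circle_mean_ln_norm_unit by simp
  next
    case 3
    hence b: "cmod (inverse a) < 1" by (simp add: norm_inverse inverse_less_1_iff)
    have "ln (cmod (ecirc t - a)) = ln (cmod a) + ln (cmod (1 - inverse a * ecirc t))" for t
    proof -
      have "ecirc t - a = - a * (1 - inverse a * ecirc t)" using 3 by (auto simp: field_simps)
      hence "cmod (ecirc t - a) = cmod a * cmod (1 - inverse a * ecirc t)" by (simp add: norm_mult)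
      moreover have "cmod (1 - inverse a * ecirc t) > 0"
        using b by (metis norm_ecirc mult.commute mult_cancel_left1 norm_mult right_minus_eq less_irrefl
            zero_less_norm_iff)
      ultimately show ?thesis using 3 by (metis ln_mult_pos less_trans zero_less_one)
    qed
    thus ?thesis
      using set_integral_add[OF set_integrable_const_unit_interval circle_mean_ln_norm_one_minus(1)[OF b]]
        circle_mean_ln_norm_one_minus(2)[OF b] 3 by simp
  qed
  thus "set_integrable lborel {0..1} (\<lambda>t. ln (cmod (ecirc t - a)))"
    "(LINT t:{0..1}|lborel. ln (cmod (ecirc t - a))) = ln (max 1 (cmod a))" by auto
qed

lemma poly_has_root:
  fixes p :: "complex poly"
  assumes "degree p \<noteq> 0"
  shows "\<exists>a. poly p a = 0"
proof -
  have "coeff p (degree p) \<noteq> 0" using assms leading_coeff_neq_0 by force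
  hence "coeff p 0 = 0 \<or> (\<exists>i\<in>{1..degree p}. coeff p i \<noteq> 0)"
    using assms by (intro disjI2 bexI[of _ "degree p"]) auto
  from fundamental_theorem_of_algebra[OF this] show ?thesis by (metis poly_altdef)
qed

lemma jensen_inequality_poly:
  fixes p :: "complex poly"
  assumes "poly p 0 \<noteq> 0"
  shows "set_integrable lborel {0..1} (\<lambda>t. ln (cmod (poly p (ecirc t)))) \<and>
         ln (cmod (poly p 0)) \<le> (LINT t:{0..1}|lborel. ln (cmod (poly p (ecirc t))))"
  using assms
proof (induction "degree p" arbitrary: p rule: less_induct)
  case less
  show ?case
  proof (cases "degree p = 0")
    case True
    then obtain c where "p = [:c:]" by (rule degree_eq_zeroE)
    thus ?thesis using set_integrable_const_unit_interval by simp
  next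
    case False
    then obtain a where "poly p a = 0" using poly_has_root by blast
    then obtain q where pq: "p = [:-a, 1:] * q" by (metis dvdE poly_eq_0_iff_dvd)
    have pv: "poly p x = (x - a) * poly q x" for x unfolding pq by (simp add: algebra_simps)
    have a0: "a \<noteq> 0" and q0: "poly q 0 \<noteq> 0" using less.prems pv[of 0] by auto
    have "degree p = degree q + 1" unfolding pq using q0 by (subst degree_mult_eq) auto
    hence IH: "set_integrable lborel {0..1} (\<lambda>t. ln (cmod (poly q (ecirc t)))) \<and>
         ln (cmod (poly q 0)) \<le> (LINT t:{0..1}|lborel. ln (cmod (poly q (ecirc t))))"
      using less.hyps q0 by simp
    have "p \<noteq> 0" using less.prems by auto
    have eq: "AE t\<in>{0..1} in lborel.
        ln (cmod (poly p (ecirc t))) = ln (cmod (ecirc t - a)) + ln (cmod (poly q (ecirc t)))"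
      using AE_poly_ecirc_nonzero[OF \<open>p \<noteq> 0\<close>]
      by eventually_elim (auto simp: pv norm_mult ln_mult_pos)
    have si: "set_integrable lborel {0..1} (\<lambda>t. ln (cmod (ecirc t - a)) + ln (cmod (poly q (ecirc t))))"
      using circle_mean_ln_norm_minus(1)[of a] IH by auto
    have [measurable]: "(\<lambda>t. poly r (ecirc t)) \<in> borel_measurable borel" for r
      by (intro borel_measurable_continuous_onI continuous_intros)
    have "ln (cmod (poly p 0)) = ln (cmod a) + ln (cmod (poly q 0))"
      using pv[of 0] a0 q0 by (simp add: norm_mult ln_mult_pos)
    also have "\<dots> \<le> ln (max 1 (cmod a)) + (LINT t:{0..1}|lborel. ln (cmod (poly q (ecirc t))))"
      using IH a0 by (intro add_mono) auto
    also have "\<dots> = (LINT t:{0..1}|lborel. ln (cmod (ecirc t - a)) + ln (cmod (poly q (ecirc t))))"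
      using set_integral_add(2)[OF circle_mean_ln_norm_minus(1)[of a]] IH circle_mean_ln_norm_minus(2)[of a]
      by auto
    also have "\<dots> = (LINT t:{0..1}|lborel. ln (cmod (poly p (ecirc t))))"
      by (rule set_lebesgue_integral_cong_AE[symmetric]) (use eq in auto)
    moreover have "set_integrable lborel {0..1} (\<lambda>t. ln (cmod (poly p (ecirc t))))"
      using set_integrable_cong_AE[OF _ _ eq] si by simp
    ultimately show ?thesis by simp
  qed
qed

section \<open>Shift invariance of integrals of periodic functions\<close>

lemma periodic_add_of_int:
  fixes f :: "real \<Rightarrow> 'a"
  assumes per: "\<And>x. f (x + 1) = f x"
  shows "f (x + of_int n) = f x"
proof -
  have pn: "f (x + real m) = f x" for x m
    by (induction m arbitrary: x) (simp_all add: per add.assoc[symmetric] add.commute[of 1])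
  show ?thesis
  proof (cases "n \<ge> 0")
    case True thus ?thesis using pn[of x "nat n"] by simp
  next
    case False
    have "f (x + of_int n) = f (x + of_int n + real (nat (-n)))" using pn by simp
    also have "x + of_int n + real (nat (-n)) = x" using False by simp
    finally show ?thesis .
  qed
qed

lemma set_integral_periodic_shift_unit:
  fixes f :: "real \<Rightarrow> real"
  assumes per: "\<And>x. f (x + 1) = f x"
    and fm [measurable]: "f \<in> borel_measurable borel"
    and fi: "set_integrable lborel {0..1} f"
    and c: "0 \<le> c" "c \<le> 1"
  shows "set_integrable lborel {0..1} (\<lambda>x. f (x + c))"
    and "(LINT x:{0..1}|lborel. f (x + c)) = (LINT x:{0..1}|lborel. f x)"
proof -
  \<comment> \<open>split \<open>[c, 1 + c]\<close> into \<open>[c, 1)\<close> and \<open>[1, 1 + c]\<close>, and move the second piece back to \<open>[0, c]\<close>\<close>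
  define F where "F y = indicator {c..1+c} y * f y" for y
  define G where "G x = indicator {0..c} x * f x" for x
  define K where "K y = indicator {c..<1} y * f y" for y
  have Gi: "integrable lborel G"
    using set_integrable_subset[OF fi, of "{0..c}"] c unfolding G_def set_integrable_def by auto
  have "{c..<1} \<subseteq> {0..1}" using c by auto
  hence Ki: "integrable lborel K"
    using set_integrable_subset[OF fi] unfolding K_def set_integrable_def by auto
  have Gs: "integrable lborel (\<lambda>y. G (-1 + 1 * y))"
    using lborel_integrable_real_affine[OF Gi, of 1 "-1"] by simp
  have FKG: "F y = K y + G (-1 + 1 * y)" for y
    using per[of "-1 + y"] c unfolding F_def K_def G_def by (auto simp: indicator_def)
  have Fi: "integrable lborel F"
    unfolding FKG[abs_def] using Ki Gs by (rule Bochner_Integration.integrable_add)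
  have eqs: "(\<lambda>x. indicator {0..1} x *\<^sub>R f (x + c)) = (\<lambda>x. F (c + 1 * x))"
    unfolding F_def by (auto simp: indicator_def add.commute)
  show "set_integrable lborel {0..1} (\<lambda>x. f (x + c))"
    unfolding set_integrable_def eqs using lborel_integrable_real_affine[OF Fi, of 1 c] by simp
  have "(LINT x:{0..1}|lborel. f (x + c)) = integral\<^sup>L lborel F"
    unfolding set_lebesgue_integral_def eqs using lborel_integral_real_affine[of 1 F c] by simp
  also have "\<dots> = integral\<^sup>L lborel K + integral\<^sup>L lborel (\<lambda>y. G (-1 + 1 * y))"
    unfolding FKG[abs_def] using Ki Gs by (rule Bochner_Integration.integral_add)
  also have "integral\<^sup>L lborel (\<lambda>y. G (-1 + 1 * y)) = integral\<^sup>L lborel G"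
    using lborel_integral_real_affine[of 1 G "-1"] by simp
  also have "integral\<^sup>L lborel K + integral\<^sup>L lborel G = integral\<^sup>L lborel (\<lambda>y. K y + G y)"
    using Ki Gi by (rule Bochner_Integration.integral_add[symmetric])
  also have "\<dots> = (LINT x:{0..1}|lborel. f x)"
    unfolding set_lebesgue_integral_def
  proof (rule integral_cong_AE)
    show "(\<lambda>y. K y + G y) \<in> borel_measurable lborel" unfolding K_def G_def by measurable
    show "(\<lambda>x. indicator {0..1} x *\<^sub>R f x) \<in> borel_measurable lborel" by measurable
    have "{c, 1} \<in> null_sets lborel" by (rule countable_imp_null_set_lborel) simp
    hence "AE y in lborel. y \<notin> {c, 1}" by (rule AE_not_in)
    thus "AE y in lborel. K y + G y = indicator {0..1} y *\<^sub>R f y"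
      by eventually_elim (use c in \<open>auto simp: K_def G_def indicator_def\<close>)
  qed
  finally show "(LINT x:{0..1}|lborel. f (x + c)) = (LINT x:{0..1}|lborel. f x)" .
qed

lemma set_integral_periodic_shift:
  fixes f :: "real \<Rightarrow> real"
  assumes per: "\<And>x. f (x + 1) = f x"
    and fm: "f \<in> borel_measurable borel"
    and fi: "set_integrable lborel {0..1} f"
  shows "set_integrable lborel {0..1} (\<lambda>x. f (x + c))"
    and "(LINT x:{0..1}|lborel. f (x + c)) = (LINT x:{0..1}|lborel. f x)"
proof -
  define d where "d = c - of_int \<lfloor>c\<rfloor>"
  have d: "0 \<le> d" "d \<le> 1" unfolding d_def by linarith+
  have eq: "f (x + c) = f (x + d)" for x
    using periodic_add_of_int[of f "x + d" "\<lfloor>c\<rfloor>", OF per] unfolding d_def by (simp add: algebra_simps)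
  show "set_integrable lborel {0..1} (\<lambda>x. f (x + c))"
    "(LINT x:{0..1}|lborel. f (x + c)) = (LINT x:{0..1}|lborel. f x)"
    unfolding eq using set_integral_periodic_shift_unit[OF per fm fi d] by simp_all
qed

section \<open>Fekete's subadditive lemma\<close>

lemma subadditive_mult_le:
  fixes a :: "nat \<Rightarrow> real"
  assumes sub: "\<And>m n. a (m + n) \<le> a m + a n" and q: "q \<ge> 1"
  shows "a (q * m) \<le> real q * a m"
  using q
proof (induction q rule: nat_induct_at_least)
  case (Suc q)
  have "a (Suc q * m) \<le> a (q * m) + a m" using sub[of "q * m" m] by (simp add: add.commute)
  thus ?case using Suc by (simp add: algebra_simps)
qed simp

lemma subadditive_quotient_le:
  fixes a :: "nat \<Rightarrow> real"
  assumes sub: "\<And>m n. a (m + n) \<le> a m + a n" and m: "1 \<le> m" "m \<le> n"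
  shows "a n / n \<le> a m / m + (m * \<bar>a m / m\<bar> + (\<Sum>r<m. \<bar>a r\<bar>)) / n"
proof -
  define x where "x = a m / m"
  define q where "q = n div m"
  define r where "r = n mod m"
  have nqr: "n = q * m + r" and rm: "r < m" unfolding q_def r_def using m by simp_all
  have q1: "q \<ge> 1" unfolding q_def using div_le_mono[OF m(2), of m] m by simp
  have "\<bar>a r\<bar> \<le> (\<Sum>r<m. \<bar>a r\<bar>)" using rm by (intro member_le_sum) auto
  hence "a n \<le> real q * a m + (\<Sum>r<m. \<bar>a r\<bar>)"
    using sub[of "q * m" r] subadditive_mult_le[OF sub q1, of m] by (simp add: nqr)
  moreover have "real q * a m = real n * x - real r * x" unfolding x_def using m by (simp add: nqr field_simps)
  moreover have "- (real r * x) \<le> real r * \<bar>x\<bar>"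
    using abs_ge_minus_self[of "real r * x"] by (simp add: abs_mult)
  moreover have "real r * \<bar>x\<bar> \<le> real m * \<bar>x\<bar>" using rm by (intro mult_right_mono) auto
  ultimately have "a n \<le> real n * x + (m * \<bar>x\<bar> + (\<Sum>r<m. \<bar>a r\<bar>))" by linarith
  thus ?thesis unfolding x_def using m by (simp add: field_simps)
qed

lemma fekete:
  fixes a :: "nat \<Rightarrow> real"
  assumes sub: "\<And>m n. a (m + n) \<le> a m + a n"
    and bdd: "bdd_below ((\<lambda>n. a n / n) ` {1..})"
  shows "(\<lambda>n. a n / n) \<longlonglongrightarrow> Inf ((\<lambda>n. a n / n) ` {1..})"
proof (rule order_tendstoI)
  let ?L = "Inf ((\<lambda>n. a n / n) ` {1..})"
  fix y assume y: "y < ?L"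
  have le: "?L \<le> a n / n" if "n \<ge> 1" for n using that bdd by (intro cInf_lower) auto
  show "eventually (\<lambda>n. y < a n / n) sequentially"
    using eventually_ge_at_top[of 1] by eventually_elim (use le y in \<open>fastforce intro: less_le_trans\<close>)
next
  let ?L = "Inf ((\<lambda>n. a n / n) ` {1..})"
  fix y assume "?L < y"
  then obtain m where m: "m \<ge> 1" "a m / m < y" using cInf_less_iff[OF _ bdd] by auto
  define K where "K = m * \<bar>a m / m\<bar> + (\<Sum>r<m. \<bar>a r\<bar>)"
  have "(\<lambda>n. a m / m + K / real n) \<longlonglongrightarrow> a m / m + 0" by (intro tendsto_intros lim_const_over_n)
  hence "eventually (\<lambda>n. a m / m + K / real n < y) sequentially" using m(2) by (simp add: order_tendstoD)
  thus "eventually (\<lambda>n. a n / n < y) sequentially"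
    using eventually_ge_at_top[of m]
    by eventually_elim (use subadditive_quotient_le[OF sub m(1)] in \<open>fastforce simp: K_def\<close>)
qed

lemma fekete_lower_bound:
  fixes a :: "nat \<Rightarrow> real"
  assumes sub: "\<And>m n. a (m + n) \<le> a m + a n" and low: "\<And>n. real n * B - C \<le> a n"
  shows "convergent (\<lambda>n. a n / n)" and "B \<le> lim (\<lambda>n. a n / n)"
proof -
  have low': "B - C / n \<le> a n / n" if "n \<ge> 1" for n
  proof -
    have "B - C / n = (n * B - C) / n" using that by (simp add: field_simps)
    also have "\<dots> \<le> a n / n" using low[of n] by (intro divide_right_mono) auto
    finally show ?thesis .
  qed
  have "B - \<bar>C\<bar> \<le> a n / n" if "n \<ge> 1" for n
  proof -
    have "C \<le> real n * \<bar>C\<bar>"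
      using that abs_ge_self[of C] mult_right_mono[of 1 "real n" "\<bar>C\<bar>"] by simp
    hence "C / n \<le> \<bar>C\<bar>" using that by (simp add: pos_divide_le_eq mult.commute)
    thus ?thesis using low'[OF that] by linarith
  qed
  hence "bdd_below ((\<lambda>n. a n / n) ` {1..})" by (intro bdd_belowI2[of _ "B - \<bar>C\<bar>"]) simp
  from fekete[OF sub this] have lim: "(\<lambda>n. a n / n) \<longlonglongrightarrow> lim (\<lambda>n. a n / n)"
    by (simp add: limI)
  thus "convergent (\<lambda>n. a n / n)" by (rule convergentI)
  show "B \<le> lim (\<lambda>n. a n / n)"
    using LIMSEQ_le[OF tendsto_diff[OF tendsto_const lim_const_over_n[of C]] lim] low'
    by (simp add: eventually_sequentially) blast
qed

section \<open>The operator norm of \<open>2 \<times> 2\<close> complex matrices\<close>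

lemma mnorm_mult_vec_le: "norm (M *v x) \<le> mnorm M * norm x"
  unfolding mnorm_def by (rule onorm) simp

lemma mnorm_nonneg: "0 \<le> mnorm M"
  unfolding mnorm_def by (rule onorm_pos_le) simp

lemma mnorm_mult_le: "mnorm (M ** N) \<le> mnorm M * mnorm N"
proof -
  have "(\<lambda>v. (M ** N) *v v) = ((*v) M) \<circ> ((*v) N)"
    by (auto simp: matrix_vector_mul_assoc[symmetric] o_def)
  thus ?thesis unfolding mnorm_def by (simp add: onorm_compose)
qed

lemma mnorm_le_entries:
  "mnorm M \<le> cmod (M$1$1) + cmod (M$1$2) + cmod (M$2$1) + cmod (M$2$2)"
  unfolding mnorm_def
proof (rule onorm_le)
  fix x :: "complex^2"
  have x: "cmod (x$1) \<le> norm x" "cmod (x$2) \<le> norm x"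
    using Finite_Cartesian_Product.norm_nth_le[of x] by auto
  have "norm (M *v x) \<le> cmod ((M *v x)$1) + cmod ((M *v x)$2)"
    using L2_set_le_sum[of "UNIV :: 2 set" "\<lambda>i. norm ((M *v x)$i)"] by (simp add: norm_vec_def sum_2)
  also have "(M *v x)$1 = M$1$1 * x$1 + M$1$2 * x$2" by (simp add: matrix_vector_mult_def sum_2)
  also have "(M *v x)$2 = M$2$1 * x$1 + M$2$2 * x$2" by (simp add: matrix_vector_mult_def sum_2)
  also have "cmod (M$1$1 * x$1 + M$1$2 * x$2) + cmod (M$2$1 * x$1 + M$2$2 * x$2)
      \<le> (cmod (M$1$1) * cmod (x$1) + cmod (M$1$2) * cmod (x$2))
        + (cmod (M$2$1) * cmod (x$1) + cmod (M$2$2) * cmod (x$2))"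
    by (intro add_mono norm_triangle_le) (simp_all add: norm_mult)
  also have "\<dots> \<le> (cmod (M$1$1) * norm x + cmod (M$1$2) * norm x)
                 + (cmod (M$2$1) * norm x + cmod (M$2$2) * norm x)"
    using x by (intro add_mono mult_left_mono) auto
  finally show "norm (M *v x) \<le> (cmod (M$1$1) + cmod (M$1$2) + cmod (M$2$1) + cmod (M$2$2)) * norm x"
    by (simp add: algebra_simps)
qed

lemma mnorm_diff_le: "\<bar>mnorm M - mnorm N\<bar> \<le> 4 * norm (M - N)"
proof -
  have triangle: "mnorm A \<le> mnorm B + 4 * norm (A - B)" for A B :: "complex^2^2"
  proof -
    have "(*v) A = (\<lambda>v. B *v v + (A - B) *v v)" by (auto simp: matrix_vector_mult_diff_rdistrib)
    hence "mnorm A \<le> mnorm B + mnorm (A - B)"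
      unfolding mnorm_def using onorm_triangle[of "(*v) B" "(*v) (A - B)"] by simp
    moreover have entry: "cmod ((A - B)$i$j) \<le> norm (A - B)" for i j
      using Finite_Cartesian_Product.norm_nth_le[of "(A - B)$i" j]
        Finite_Cartesian_Product.norm_nth_le[of "A - B" i] by linarith
    ultimately show ?thesis
      using mnorm_le_entries[of "A - B"] entry[of 1 1] entry[of 1 2] entry[of 2 1] entry[of 2 2] by linarith
  qed
  show ?thesis using triangle[of M N] triangle[of N M] by (simp add: norm_minus_commute abs_le_iff)
qed

lemma borel_measurable_mnorm [measurable]: "mnorm \<in> borel_measurable borel"
proof (intro borel_measurable_continuous_onI lipschitz_on_continuous_on[of 4] lipschitz_onI)
  show "dist (mnorm M) (mnorm N) \<le> 4 * dist M N" for M N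
    using mnorm_diff_le[of M N] by (simp add: dist_norm)
qed simp

lemma norm_vec_cmult: "norm ((\<chi> i. c * x$i) :: complex^'n) = cmod c * norm x"
  unfolding norm_vec_def by (simp add: norm_mult L2_set_right_distrib)

lemma mnorm_cmult_le: "mnorm (\<chi> i j. c * M$i$j) \<le> cmod c * mnorm M"
  unfolding mnorm_def
proof (rule onorm_le)
  fix x :: "complex^2"
  have "(\<chi> i j. c * M$i$j) *v x = (\<chi> i. c * (M *v x)$i)"
    by (simp add: matrix_vector_mult_def vec_eq_iff sum_distrib_left mult_ac)
  hence "norm ((\<chi> i j. c * M$i$j) *v x) = cmod c * norm (M *v x)" by (simp add: norm_vec_cmult)
  also have "\<dots> \<le> cmod c * (mnorm M * norm x)" by (intro mult_left_mono mnorm_mult_vec_le) simp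
  finally show "norm ((\<chi> i j. c * M$i$j) *v x) \<le> cmod c * onorm ((*v) M) * norm x"
    by (simp add: mnorm_def mult_ac)
qed

lemma mnorm_cmult: "mnorm (\<chi> i j. c * M$i$j) = cmod c * mnorm M"
proof (cases "c = 0")
  case True thus ?thesis using mnorm_cmult_le[of c M] mnorm_nonneg[of "\<chi> i j. c * M$i$j"] by simp
next
  case False
  have "M = (\<chi> i j. inverse c * (\<chi> i j. c * M$i$j)$i$j)" using False by (simp add: vec_eq_iff)
  hence "mnorm M \<le> cmod (inverse c) * mnorm (\<chi> i j. c * M$i$j)" by (metis mnorm_cmult_le)
  hence "cmod c * mnorm M \<le> cmod c * (cmod (inverse c) * mnorm (\<chi> i j. c * M$i$j))"
    by (rule mult_left_mono) simp
  hence "cmod c * mnorm M \<le> mnorm (\<chi> i j. c * M$i$j)"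
    using False by (simp add: norm_inverse mult.assoc[symmetric])
  thus ?thesis using mnorm_cmult_le[of c M] by simp
qed

section \<open>The cocycle as a matrix of polynomials on the circle\<close>

lemma lprime_sq: "0 \<le> l \<Longrightarrow> l \<le> 1 \<Longrightarrow> (lprime l)^2 = 1 - l^2"
  unfolding lprime_def using power_le_one[of l 2] by simp

lemma lprime_nonneg: "0 \<le> l \<Longrightarrow> l \<le> 1 \<Longrightarrow> 0 \<le> lprime l"
  unfolding lprime_def using power_le_one[of l 2] by simp

lemma lprime_le_1: "0 \<le> l \<Longrightarrow> l \<le> 1 \<Longrightarrow> lprime l \<le> 1"
  unfolding lprime_def by (simp add: real_sqrt_le_1_iff)

lemma lprime_strict_antimono: "0 \<le> a \<Longrightarrow> a < b \<Longrightarrow> lprime b < lprime a"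
  unfolding lprime_def by (intro real_sqrt_less_mono) (simp add: power_strict_mono)

lemma ecirc_sq:
  "1 + ecirc t ^ 2 = 2 * of_real (cc t) * ecirc t"
  "\<i> * (1 - ecirc t ^ 2) = 2 * of_real (ss t) * ecirc t"
proof -
  have "(cc t)^2 + (ss t)^2 = 1" unfolding cc_def ss_def by simp
  hence cs: "(of_real (cc t) :: complex)^2 + (of_real (ss t))^2 = 1"
    by (metis of_real_1 of_real_add of_real_power)
  show "1 + ecirc t ^ 2 = 2 * of_real (cc t) * ecirc t"
    "\<i> * (1 - ecirc t ^ 2) = 2 * of_real (ss t) * ecirc t"
    unfolding ecirc_eq_cc_ss cs[symmetric] by (simp_all add: power2_eq_square algebra_simps)
qed

text \<open>Multiplying \<open>A(\<theta>)\<close> by \<open>w = e(\<theta>)\<close> in numerator and denominator turns every entry into a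
  polynomial in \<open>w\<close>, because \<open>2 c(\<theta>) w = 1 + w\<^sup>2\<close> and \<open>2 i s(\<theta>) w = w\<^sup>2 - 1\<close>.\<close>

definition denom_poly :: "real \<Rightarrow> complex poly" where
  "denom_poly l2 = [: of_real (l2/2), - \<i> * of_real (lprime l2), of_real (l2/2) :]"

definition numer_a :: "real \<Rightarrow> real \<Rightarrow> complex \<Rightarrow> complex poly" where
  "numer_a l1 l2 z = [: \<i> * of_real (lprime l1 * l2 / l1),
      inverse (of_real l1) * inverse z + z * of_real ((lprime l1)^2 / l1),
      - \<i> * of_real (lprime l1 * l2 / l1) :]"

definition numer_b :: "real \<Rightarrow> real \<Rightarrow> complex \<Rightarrow> complex poly" where
  "numer_b l1 l2 z = [: - \<i> * of_real (l2/2), - of_real (lprime l1) * z, \<i> * of_real (l2/2) :]"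

definition numer_e :: "real \<Rightarrow> complex \<Rightarrow> complex poly" where
  "numer_e l1 z = [: 0, of_real l1 * z :]"

definition numer_matrix :: "real \<Rightarrow> real \<Rightarrow> complex \<Rightarrow> complex poly^2^2" where
  "numer_matrix l1 l2 z = (\<chi> i j. if i = 1 then (if j = 1 then numer_a l1 l2 z else numer_b l1 l2 z)
                       else (if j = 1 then numer_b l1 l2 z else numer_e l1 z))"

lemma poly_denom_poly_ecirc:
  "poly (denom_poly l2) (ecirc t) = ecirc t * (of_real (l2 * cc t) - \<i> * of_real (lprime l2))"
proof -
  have "poly (denom_poly l2) (ecirc t) = of_real (l2/2) * (1 + ecirc t ^ 2) - \<i> * of_real (lprime l2) * ecirc t"
    by (simp add: denom_poly_def algebra_simps power2_eq_square)
  thus ?thesis unfolding ecirc_sq by (simp add: algebra_simps)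
qed

lemma UAMO_A_eq_poly:
  "UAMO_A l1 l2 z t = (\<chi> i j. poly (numer_matrix l1 l2 z $ i $ j) (ecirc t) / poly (denom_poly l2) (ecirc t))"
proof -
  have "poly (numer_a l1 l2 z) (ecirc t) = of_real (lprime l1 * l2 / l1) * (\<i> * (1 - ecirc t ^ 2))
      + (inverse (of_real l1) * inverse z + z * of_real ((lprime l1)^2 / l1)) * ecirc t"
    by (simp add: numer_a_def power2_eq_square divide_inverse algebra_simps)
  hence a: "poly (numer_a l1 l2 z) (ecirc t) = ecirc t * (inverse (complex_of_real l1) * inverse z
       + complex_of_real (2 * lprime l1 / l1 * l2 * ss t) + z * complex_of_real ((lprime l1)\<^sup>2 / l1))"
    unfolding ecirc_sq by (simp add: algebra_simps)
  have "poly (numer_b l1 l2 z) (ecirc t)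
      = - of_real (l2/2) * (\<i> * (1 - ecirc t ^ 2)) - of_real (lprime l1) * z * ecirc t"
    by (simp add: numer_b_def algebra_simps power2_eq_square)
  hence b: "poly (numer_b l1 l2 z) (ecirc t)
      = ecirc t * (- complex_of_real (l2 * ss t) - complex_of_real (lprime l1) * z)"
    unfolding ecirc_sq by (simp add: algebra_simps)
  have e: "poly (numer_e l1 z) (ecirc t) = ecirc t * (complex_of_real l1 * z)"
    by (simp add: numer_e_def algebra_simps)
  show ?thesis
    unfolding UAMO_A_def Let_def vec_eq_iff forall_2 numer_matrix_def
    by (simp add: poly_denom_poly_ecirc a b e mult_divide_mult_cancel_left)
qed

definition poly_matrix_rescale :: "complex poly^'n^'m \<Rightarrow> complex \<Rightarrow> complex poly^'n^'m" where
  "poly_matrix_rescale M c = (\<chi> i j. pcompose (M $ i $ j) [:0, c:])"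

fun numer_iter :: "real \<Rightarrow> real \<Rightarrow> complex \<Rightarrow> complex \<Rightarrow> nat \<Rightarrow> complex poly^2^2" where
  "numer_iter l1 l2 z \<omega> 0 = mat 1"
| "numer_iter l1 l2 z \<omega> (Suc n) = poly_matrix_rescale (numer_matrix l1 l2 z) (\<omega>^n) ** numer_iter l1 l2 z \<omega> n"

definition denom_iter :: "real \<Rightarrow> complex \<Rightarrow> nat \<Rightarrow> complex \<Rightarrow> complex" where
  "denom_iter l2 \<omega> n w = (\<Prod>k<n. poly (denom_poly l2) (\<omega>^k * w))"

lemma UAMO_iter_eq_poly:
  "UAMO_iter l1 l2 \<Phi> z n t =
     (\<chi> i j. poly (numer_iter l1 l2 z (ecirc \<Phi>) n $ i $ j) (ecirc t) / denom_iter l2 (ecirc \<Phi>) n (ecirc t))"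
proof (induction n)
  case 0
  show ?case by (simp add: denom_iter_def vec_eq_iff mat_def)
next
  case (Suc n)
  let ?w = "ecirc \<Phi>" and ?e = "ecirc t"
  have A: "UAMO_A l1 l2 z (t + real n * \<Phi>) =
      (\<chi> i j. poly (numer_matrix l1 l2 z $ i $ j) (?w^n * ?e) / poly (denom_poly l2) (?w^n * ?e))"
    unfolding UAMO_A_eq_poly ecirc_add_nat_mult by (simp add: mult.commute)
  have Q: "denom_iter l2 ?w (Suc n) ?e = poly (denom_poly l2) (?w^n * ?e) * denom_iter l2 ?w n ?e"
    unfolding denom_iter_def by simp
  show ?case
    unfolding UAMO_iter.simps numer_iter.simps Suc A Q
    by (simp add: vec_eq_iff matrix_matrix_mult_def poly_matrix_rescale_def poly_sum poly_pcompose
        sum_divide_distrib mult_ac)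
qed

lemma UAMO_iter_add:
  "UAMO_iter l1 l2 \<Phi> z (n + m) t = UAMO_iter l1 l2 \<Phi> z m (t + real n * \<Phi>) ** UAMO_iter l1 l2 \<Phi> z n t"
proof (induction m)
  case 0 show ?case by (simp add: matrix_mul_lid)
next
  case (Suc m)
  have e: "t + real (n + m) * \<Phi> = t + real n * \<Phi> + real m * \<Phi>" by (simp add: algebra_simps)
  show ?case unfolding add_Suc_right UAMO_iter.simps Suc e by (simp add: matrix_mul_assoc)
qed

definition poly_matrix_at_0 :: "complex poly^'n^'m \<Rightarrow> complex^'n^'m" where
  "poly_matrix_at_0 M = (\<chi> i j. poly (M $ i $ j) 0)"

lemma poly_matrix_at_0_mult: "poly_matrix_at_0 (A ** B) = poly_matrix_at_0 A ** poly_matrix_at_0 B"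
  by (simp add: poly_matrix_at_0_def matrix_matrix_mult_def vec_eq_iff poly_sum)

lemma poly_matrix_at_0_rescale: "poly_matrix_at_0 (poly_matrix_rescale M c) = poly_matrix_at_0 M"
  by (simp add: poly_matrix_at_0_def poly_matrix_rescale_def poly_pcompose)

text \<open>At \<open>w = 0\<close> the numerator matrix is \<open>[[i\<lambda>\<^sub>1'\<lambda>\<^sub>2/\<lambda>\<^sub>1, -i\<lambda>\<^sub>2/2], [-i\<lambda>\<^sub>2/2, 0]]\<close>; its eigenvector
  \<open>(\<tau>, -1)\<close> with \<open>\<tau> = (1 + \<lambda>\<^sub>1')/\<lambda>\<^sub>1\<close> (a root of \<open>\<tau>\<^sup>2 = 2\<tau>\<lambda>\<^sub>1'/\<lambda>\<^sub>1 + 1\<close>) has eigenvalue \<open>i\<lambda>\<^sub>2\<tau>/2\<close>.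
  Rescaling the variable does not change constant terms, so at \<open>w = 0\<close> the \<open>n\<close>-th iterate multiplies
  this vector by the \<open>n\<close>-th power of the eigenvalue.\<close>

definition eig_ratio :: "real \<Rightarrow> real" where "eig_ratio l1 = (1 + lprime l1) / l1"

definition eig_vec :: "real \<Rightarrow> complex^2" where
  "eig_vec l1 = (\<chi> i. if i = 1 then of_real (eig_ratio l1) else -1)"

definition eig_val :: "real \<Rightarrow> real \<Rightarrow> complex" where
  "eig_val l1 l2 = \<i> * of_real (l2 / 2 * eig_ratio l1)"

definition eig_poly :: "real \<Rightarrow> real \<Rightarrow> complex \<Rightarrow> complex \<Rightarrow> nat \<Rightarrow> complex poly" where
  "eig_poly l1 l2 z \<omega> n = numer_iter l1 l2 z \<omega> n $ 2 $ 1 * [: of_real (eig_ratio l1) :] - numer_iter l1 l2 z \<omega> n $ 2 $ 2"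

lemma eig_ratio_sq:
  assumes "0 < l1" "l1 \<le> 1"
  shows "(eig_ratio l1)^2 = 2 * (lprime l1 / l1) * eig_ratio l1 + 1"
proof -
  have s: "(lprime l1)^2 = 1 - l1^2" using assms by (intro lprime_sq) auto
  have "(eig_ratio l1)^2 * l1^2 = (1 + lprime l1)^2" unfolding eig_ratio_def using assms by (simp add: power_divide)
  also have "\<dots> = 2 * lprime l1 * (1 + lprime l1) + l1^2" using s by (simp add: power2_eq_square algebra_simps)
  also have "\<dots> = (2 * (lprime l1 / l1) * eig_ratio l1 + 1) * l1^2" unfolding eig_ratio_def using assms
    by (simp add: field_simps power2_eq_square)
  finally show ?thesis using assms by simp
qed

lemma numer_matrix_at_0_eig_vec:
  assumes "0 < l1" "l1 \<le> 1"
  shows "poly_matrix_at_0 (numer_matrix l1 l2 z) *v eig_vec l1 = (\<chi> i. eig_val l1 l2 * eig_vec l1 $ i)"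
proof -
  have "(of_real (eig_ratio l1) :: complex)^2 = 2 * of_real (lprime l1 / l1) * of_real (eig_ratio l1) + 1"
    using arg_cong[OF eig_ratio_sq[OF assms], of "of_real :: real \<Rightarrow> complex"] by simp
  hence "\<i> * of_real (lprime l1 * l2 / l1) * of_real (eig_ratio l1) + \<i> * of_real (l2 / 2) =
            \<i> * of_real (l2 / 2 * eig_ratio l1) * of_real (eig_ratio l1)"
    by (simp add: power2_eq_square algebra_simps)
  thus ?thesis
    unfolding vec_eq_iff forall_2
    by (simp add: poly_matrix_at_0_def numer_matrix_def numer_a_def numer_b_def numer_e_def
        matrix_vector_mult_def sum_2 eig_vec_def eig_val_def)
qed

lemma numer_iter_at_0_eig_vec:
  assumes "0 < l1" "l1 \<le> 1"
  shows "poly_matrix_at_0 (numer_iter l1 l2 z \<omega> n) *v eig_vec l1 = (\<chi> i. eig_val l1 l2 ^ n * eig_vec l1 $ i)"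
proof (induction n)
  case 0 show ?case by (simp add: poly_matrix_at_0_def vec_eq_iff mat_def matrix_vector_mult_def sum_2 forall_2)
next
  case (Suc n)
  have "poly_matrix_at_0 (numer_iter l1 l2 z \<omega> (Suc n)) *v eig_vec l1
      = poly_matrix_at_0 (numer_matrix l1 l2 z) *v (\<chi> i. eig_val l1 l2 ^ n * eig_vec l1 $ i)"
    using Suc by (simp add: poly_matrix_at_0_mult poly_matrix_at_0_rescale matrix_vector_mul_assoc[symmetric])
  also have "\<dots> = (\<chi> i. eig_val l1 l2 ^ n * (poly_matrix_at_0 (numer_matrix l1 l2 z) *v eig_vec l1) $ i)"
    by (simp add: vec_eq_iff matrix_vector_mult_def sum_distrib_left mult_ac)
  finally show ?case unfolding numer_matrix_at_0_eig_vec[OF assms] by (simp add: mult_ac)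
qed

lemma poly_eig_poly_0:
  assumes "0 < l1" "l1 \<le> 1"
  shows "poly (eig_poly l1 l2 z \<omega> n) 0 = - (eig_val l1 l2 ^ n)"
  using arg_cong[OF numer_iter_at_0_eig_vec[OF assms], of "\<lambda>v. v $ 2"]
  by (simp add: eig_poly_def poly_matrix_at_0_def matrix_vector_mult_def sum_2 eig_vec_def mult.commute)

lemma norm_eig_val:
  assumes "0 < l1" "l1 \<le> 1" "0 < l2"
  shows "cmod (eig_val l1 l2) = l2 / 2 * eig_ratio l1"
  using assms lprime_nonneg[of l1] unfolding eig_val_def eig_ratio_def norm_mult norm_of_real by simp

lemma eig_val_nonzero:
  assumes "0 < l1" "l1 \<le> 1" "0 < l2"
  shows "eig_val l1 l2 \<noteq> 0"
proof -
  have "0 < l2 / 2 * eig_ratio l1" using assms lprime_nonneg[of l1] by (simp add: eig_ratio_def add_nonneg_pos)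
  thus ?thesis using norm_eig_val[OF assms] by auto
qed

lemma norm_eig_poly_le_mnorm:
  "cmod (poly (eig_poly l1 l2 z (ecirc \<Phi>) n) (ecirc t)) / cmod (denom_iter l2 (ecirc \<Phi>) n (ecirc t))
     \<le> mnorm (UAMO_iter l1 l2 \<Phi> z n t) * norm (eig_vec l1)"
proof -
  have "(UAMO_iter l1 l2 \<Phi> z n t *v eig_vec l1) $ 2
      = poly (eig_poly l1 l2 z (ecirc \<Phi>) n) (ecirc t) / denom_iter l2 (ecirc \<Phi>) n (ecirc t)"
    unfolding UAMO_iter_eq_poly
    by (simp add: matrix_vector_mult_def sum_2 eig_vec_def eig_poly_def algebra_simps diff_divide_distrib)
  hence "cmod (poly (eig_poly l1 l2 z (ecirc \<Phi>) n) (ecirc t)) / cmod (denom_iter l2 (ecirc \<Phi>) n (ecirc t))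
      \<le> norm (UAMO_iter l1 l2 \<Phi> z n t *v eig_vec l1)"
    using Finite_Cartesian_Product.norm_nth_le[of _ 2] by (metis norm_divide)
  also have "\<dots> \<le> mnorm (UAMO_iter l1 l2 \<Phi> z n t) * norm (eig_vec l1)" by (rule mnorm_mult_vec_le)
  finally show ?thesis .
qed

lemma denom_poly_factor:
  assumes "0 < l2" "l2 \<le> 1"
  shows "poly (denom_poly l2) x
    = of_real (l2/2) * (x - \<i> * of_real ((1 + lprime l2)/l2)) * (x - \<i> * of_real ((lprime l2 - 1)/l2))"
proof -
  have "(lprime l2)^2 = 1 - l2^2" using assms by (intro lprime_sq) auto
  hence sq: "(of_real (lprime l2) :: complex)^2 = 1 - (of_real l2)^2"
    by (metis of_real_1 of_real_diff of_real_power)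
  have l0: "(of_real l2 :: complex) \<noteq> 0" using assms by simp
  have "of_real (l2/2) * (x - \<i> * of_real ((1 + lprime l2)/l2)) * (x - \<i> * of_real ((lprime l2 - 1)/l2))
      = of_real (l2/2) * x^2 - \<i> * of_real (lprime l2) * x
        + of_real (l2/2) * ((1 - (of_real (lprime l2))^2) / (of_real l2)^2)"
    using l0 by (simp add: field_simps power2_eq_square)
  also have "\<dots> = of_real (l2/2) * x^2 - \<i> * of_real (lprime l2) * x + of_real (l2/2)"
    unfolding sq using l0 by simp
  finally show ?thesis by (simp add: denom_poly_def algebra_simps power2_eq_square)
qed

lemma circle_mean_ln_norm_quadratic:
  fixes k r1 r2 :: complex
  assumes "k \<noteq> 0"
  shows "set_integrable lborel {0..1} (\<lambda>t. ln (cmod (k * (ecirc t - r1) * (ecirc t - r2))))"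
    and "(LINT t:{0..1}|lborel. ln (cmod (k * (ecirc t - r1) * (ecirc t - r2))))
           = ln (cmod k) + ln (max 1 (cmod r1)) + ln (max 1 (cmod r2))"
proof -
  let ?f = "\<lambda>t. ln (cmod k) + ln (cmod (ecirc t - r1)) + ln (cmod (ecirc t - r2))"
  have eq: "AE t\<in>{0..1} in lborel. ln (cmod (k * (ecirc t - r1) * (ecirc t - r2))) = ?f t"
    using AE_ecirc_neq[of r1] AE_ecirc_neq[of r2]
    by eventually_elim (use assms in \<open>simp add: norm_mult ln_mult_pos\<close>)
  note int1 = set_integral_add(1)[OF set_integrable_const_unit_interval circle_mean_ln_norm_minus(1)[of r1]]
  have si: "set_integrable lborel {0..1} ?f"
    using set_integral_add(1)[OF int1 circle_mean_ln_norm_minus(1)[of r2]] by simp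
  show "set_integrable lborel {0..1} (\<lambda>t. ln (cmod (k * (ecirc t - r1) * (ecirc t - r2))))"
    using set_integrable_cong_AE[OF _ _ eq] si by simp
  have "(LINT t:{0..1}|lborel. ln (cmod (k * (ecirc t - r1) * (ecirc t - r2)))) = (LINT t:{0..1}|lborel. ?f t)"
    by (rule set_lebesgue_integral_cong_AE[OF _ _ _ eq]) simp_all
  also have "\<dots> = ln (cmod k) + ln (max 1 (cmod r1)) + ln (max 1 (cmod r2))"
    using set_integral_add(2)[OF int1 circle_mean_ln_norm_minus(1)[of r2]]
      set_integral_add(2)[OF set_integrable_const_unit_interval circle_mean_ln_norm_minus(1)[of r1]]
      circle_mean_ln_norm_minus(2)[of r1] circle_mean_ln_norm_minus(2)[of r2] by simp
  finally show "(LINT t:{0..1}|lborel. ln (cmod (k * (ecirc t - r1) * (ecirc t - r2))))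
           = ln (cmod k) + ln (max 1 (cmod r1)) + ln (max 1 (cmod r2))" .
qed

lemma circle_mean_ln_norm_denom:
  assumes l2: "0 < l2" "l2 \<le> 1" and c: "cmod c = 1"
  shows "set_integrable lborel {0..1} (\<lambda>t. ln (cmod (poly (denom_poly l2) (c * ecirc t))))"
    and "(LINT t:{0..1}|lborel. ln (cmod (poly (denom_poly l2) (c * ecirc t)))) = ln ((1 + lprime l2) / 2)"
proof -
  define r1 where "r1 = \<i> * of_real ((1 + lprime l2)/l2) / c"
  define r2 where "r2 = \<i> * of_real ((lprime l2 - 1)/l2) / c"
  define k where "k = of_real (l2/2) * c^2"
  have lp: "0 \<le> lprime l2" "lprime l2 \<le> 1" using l2 lprime_nonneg lprime_le_1 by auto
  have "(1 - l2)^2 \<le> (lprime l2)^2"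
    unfolding lprime_sq[OF less_imp_le[OF l2(1)] l2(2)] using l2
    by (simp add: power2_eq_square algebra_simps mult_left_le)
  hence "1 - l2 \<le> lprime l2" using lp(1) by (rule power2_le_imp_le)
  moreover have cr: "cmod r1 = (1 + lprime l2)/l2" "cmod r2 = (1 - lprime l2)/l2"
    unfolding r1_def r2_def norm_divide norm_mult norm_of_real using c l2 lp by simp_all
  ultimately have m1: "max 1 (cmod r1) = (1 + lprime l2)/l2" and m2: "max 1 (cmod r2) = 1"
    unfolding cr using l2 lp by (simp_all add: max_def divide_le_eq le_divide_eq)
  have "c \<noteq> 0" using c by auto
  hence "poly (denom_poly l2) (c * ecirc t) = of_real (l2/2) * (c * (ecirc t - r1)) * (c * (ecirc t - r2))" for t
    unfolding denom_poly_factor[OF l2] r1_def r2_def using l2 by (simp add: field_simps)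
  hence eq: "poly (denom_poly l2) (c * ecirc t) = k * (ecirc t - r1) * (ecirc t - r2)" for t
    unfolding k_def power2_eq_square by (simp only: mult_ac)
  have k: "k \<noteq> 0" "cmod k = l2 / 2" unfolding k_def using \<open>c \<noteq> 0\<close> c l2 by (simp_all add: norm_mult norm_power)
  show "set_integrable lborel {0..1} (\<lambda>t. ln (cmod (poly (denom_poly l2) (c * ecirc t))))"
    unfolding eq by (rule circle_mean_ln_norm_quadratic(1)[OF k(1)])
  have "ln (l2 / 2) + ln ((1 + lprime l2)/l2) = ln ((1 + lprime l2) / 2)"
    using l2 lp by (simp add: ln_mult_pos[symmetric] add_nonneg_pos)
  thus "(LINT t:{0..1}|lborel. ln (cmod (poly (denom_poly l2) (c * ecirc t)))) = ln ((1 + lprime l2) / 2)"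
    unfolding eq circle_mean_ln_norm_quadratic(2)[OF k(1)] k(2) m1 m2 by simp
qed

lemma ln_norm_eig_val_diff:
  assumes l1: "0 < l1" "l1 \<le> 1" and l2: "0 < l2" "l2 \<le> 1"
  shows "ln (cmod (eig_val l1 l2)) - ln ((1 + lprime l2) / 2) = ln ((l2 * (1 + lprime l1)) / (l1 * (1 + lprime l2)))"
proof -
  have lp: "0 \<le> lprime l1" "0 \<le> lprime l2" using lprime_nonneg l1 l2 by auto
  hence "ln (cmod (eig_val l1 l2)) - ln ((1 + lprime l2) / 2)
      = ln ((l2 / 2 * ((1 + lprime l1) / l1)) / ((1 + lprime l2) / 2))"
    unfolding norm_eig_val[OF l1 l2(1)] eig_ratio_def using l1 l2
    by (subst ln_div) (auto intro!: mult_pos_pos divide_pos_pos add_nonneg_pos)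
  also have "(l2 / 2 * ((1 + lprime l1) / l1)) / ((1 + lprime l2) / 2)
      = (l2 * (1 + lprime l1)) / (l1 * (1 + lprime l2))"
  proof -
    have "0 < l1 * (1 + lprime l2)" using l1 lp by simp
    hence "l1 + l1 * lprime l2 \<noteq> 0" by (simp add: algebra_simps)
    thus ?thesis using l1 lp by (simp add: field_simps)
  qed
  finally show ?thesis .
qed

section \<open>The lower bound for the Lyapunov exponent\<close>

context
  fixes l1 l2 \<Phi> :: real and z :: complex
  assumes l1: "0 < l1" "l1 \<le> 1" and l2: "0 < l2" "l2 \<le> 1"
begin

definition log_norm_iter :: "nat \<Rightarrow> real \<Rightarrow> real" where
  "log_norm_iter n t = ln (mnorm (UAMO_iter l1 l2 \<Phi> z n t))"

definition log_denom :: "nat \<Rightarrow> real \<Rightarrow> real" where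
  "log_denom n t = (\<Sum>k<n. ln (cmod (poly (denom_poly l2) (ecirc \<Phi> ^ k * ecirc t))))"

definition log_eig_poly :: "nat \<Rightarrow> real \<Rightarrow> real" where
  "log_eig_poly n t = ln (cmod (poly (eig_poly l1 l2 z (ecirc \<Phi>) n) (ecirc t)))"

definition regular_angle :: "real \<Rightarrow> bool" where
  "regular_angle t \<longleftrightarrow> (\<forall>k. poly (denom_poly l2) (ecirc \<Phi> ^ k * ecirc t) \<noteq> 0)
                       \<and> (\<forall>n. poly (eig_poly l1 l2 z (ecirc \<Phi>) n) (ecirc t) \<noteq> 0)"

lemma AE_regular_angle: "AE t in lborel. regular_angle t"
proof -
  have "AE t in lborel. poly (denom_poly l2) (ecirc \<Phi> ^ k * ecirc t) \<noteq> 0" for k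
  proof -
    define p where "p = pcompose (denom_poly l2) [:0, ecirc \<Phi> ^ k:]"
    have pv: "poly p x = poly (denom_poly l2) (ecirc \<Phi> ^ k * x)" for x
      unfolding p_def by (simp add: poly_pcompose mult.commute)
    have "p \<noteq> 0" using pv[of 0] l2 by (auto simp: denom_poly_def)
    from AE_poly_ecirc_nonzero[OF this] show ?thesis by (simp add: pv)
  qed
  moreover have "AE t in lborel. poly (eig_poly l1 l2 z (ecirc \<Phi>) n) (ecirc t) \<noteq> 0" for n
    using poly_eig_poly_0[OF l1] eig_val_nonzero[OF l1 l2(1)]
    by (intro AE_poly_ecirc_nonzero) (metis neg_equal_0_iff_equal poly_0 power_not_zero)
  ultimately show ?thesis unfolding regular_angle_def by (simp add: AE_all_countable AE_conj_iff)
qed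

lemma regular_angle_denom_iter:
  assumes "regular_angle t"
  shows "denom_iter l2 (ecirc \<Phi>) n (ecirc t) \<noteq> 0"
    and "ln (cmod (denom_iter l2 (ecirc \<Phi>) n (ecirc t))) = log_denom n t"
  using assms unfolding regular_angle_def denom_iter_def log_denom_def prod_norm[symmetric]
  by (auto simp: ln_prod)

lemma mnorm_iter_pos:
  assumes "regular_angle t"
  shows "mnorm (UAMO_iter l1 l2 \<Phi> z n t) > 0"
proof -
  have "0 < cmod (poly (eig_poly l1 l2 z (ecirc \<Phi>) n) (ecirc t)) / cmod (denom_iter l2 (ecirc \<Phi>) n (ecirc t))"
    using assms regular_angle_denom_iter(1)[OF assms] unfolding regular_angle_def by simp
  hence "0 < mnorm (UAMO_iter l1 l2 \<Phi> z n t) * norm (eig_vec l1)"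
    using norm_eig_poly_le_mnorm by (rule less_le_trans)
  thus ?thesis using mnorm_nonneg by (simp add: zero_less_mult_iff)
qed

lemma log_norm_iter_ge:
  assumes "regular_angle t"
  shows "log_eig_poly n t - log_denom n t - ln (norm (eig_vec l1)) \<le> log_norm_iter n t"
proof -
  let ?p = "cmod (poly (eig_poly l1 l2 z (ecirc \<Phi>) n) (ecirc t))"
  let ?Q = "cmod (denom_iter l2 (ecirc \<Phi>) n (ecirc t))"
  let ?m = "mnorm (UAMO_iter l1 l2 \<Phi> z n t)"
  have p: "?p > 0" using assms unfolding regular_angle_def by auto
  have Q: "?Q > 0" using regular_angle_denom_iter(1)[OF assms] by simp
  have v: "norm (eig_vec l1) > 0" by (auto simp: eig_vec_def vec_eq_iff forall_2)
  have "ln ?p - ln ?Q = ln (?p / ?Q)" using p Q by (simp add: ln_div)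
  also have "\<dots> \<le> ln (?m * norm (eig_vec l1))"
    using p Q by (intro ln_mono norm_eig_poly_le_mnorm) auto
  also have "\<dots> = ln ?m + ln (norm (eig_vec l1))" using mnorm_iter_pos[OF assms] v by (rule ln_mult_pos)
  finally show ?thesis
    unfolding log_eig_poly_def log_norm_iter_def regular_angle_denom_iter(2)[OF assms, symmetric] by simp
qed

lemma log_norm_iter_le: "\<exists>K. \<forall>t. regular_angle t \<longrightarrow> log_norm_iter n t \<le> K - log_denom n t"
proof -
  let ?M = "numer_iter l1 l2 z (ecirc \<Phi>) n"
  define G where "G w = cmod (poly (?M$1$1) w) + cmod (poly (?M$1$2) w)
                       + cmod (poly (?M$2$1) w) + cmod (poly (?M$2$2) w)" for w
  have "compact (G ` sphere 0 1)"
    unfolding G_def by (intro compact_continuous_image continuous_intros) auto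
  then obtain B where B: "\<And>w. w \<in> sphere 0 1 \<Longrightarrow> G w \<le> B"
    by (metis bounded_iff compact_imp_bounded image_eqI real_norm_def abs_le_D1)
  have "log_norm_iter n t \<le> ln (max B 1) - log_denom n t" if t: "regular_angle t" for t
  proof -
    let ?Q = "denom_iter l2 (ecirc \<Phi>) n (ecirc t)"
    have Q: "cmod ?Q > 0" using regular_angle_denom_iter(1)[OF t] by simp
    have "mnorm (UAMO_iter l1 l2 \<Phi> z n t) \<le> G (ecirc t) / cmod ?Q"
      using mnorm_le_entries[of "UAMO_iter l1 l2 \<Phi> z n t"]
      unfolding UAMO_iter_eq_poly G_def by (simp add: norm_divide add_divide_distrib)
    also have "\<dots> \<le> max B 1 / cmod ?Q" using B[of "ecirc t"] Q by (intro divide_right_mono) auto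
    finally have "log_norm_iter n t \<le> ln (max B 1 / cmod ?Q)"
      unfolding log_norm_iter_def using mnorm_iter_pos[OF t] by (intro ln_mono) auto
    also have "\<dots> = ln (max B 1) - log_denom n t"
      using Q regular_angle_denom_iter(2)[OF t] by (subst ln_div) auto
    finally show ?thesis .
  qed
  thus ?thesis by blast
qed

lemma log_eig_poly_integral:
  shows "set_integrable lborel {0..1} (log_eig_poly n)"
    and "real n * ln (cmod (eig_val l1 l2)) \<le> (LINT t:{0..1}|lborel. log_eig_poly n t)"
proof -
  have nz: "poly (eig_poly l1 l2 z (ecirc \<Phi>) n) 0 \<noteq> 0"
    using poly_eig_poly_0[OF l1] eig_val_nonzero[OF l1 l2(1)] by simp
  have "ln (cmod (poly (eig_poly l1 l2 z (ecirc \<Phi>) n) 0)) = real n * ln (cmod (eig_val l1 l2))"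
    using poly_eig_poly_0[OF l1] eig_val_nonzero[OF l1 l2(1)] by (simp add: norm_power ln_realpow)
  with jensen_inequality_poly[OF nz]
  show "set_integrable lborel {0..1} (log_eig_poly n)"
    "real n * ln (cmod (eig_val l1 l2)) \<le> (LINT t:{0..1}|lborel. log_eig_poly n t)"
    unfolding log_eig_poly_def[abs_def] by auto
qed

lemma log_denom_integral:
  shows "set_integrable lborel {0..1} (log_denom n)"
    and "(LINT t:{0..1}|lborel. log_denom n t) = real n * ln ((1 + lprime l2) / 2)"
proof (induction n)
  case 0
  { case 1 show ?case unfolding log_denom_def set_integrable_def by simp }
  { case 2 show ?case unfolding log_denom_def by simp }
next
  case (Suc n)
  have eq: "log_denom (Suc n) = (\<lambda>t. log_denom n t + ln (cmod (poly (denom_poly l2) (ecirc \<Phi> ^ n * ecirc t))))"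
    unfolding log_denom_def by (simp add: fun_eq_iff)
  have c: "cmod (ecirc \<Phi> ^ n) = 1" by (simp add: norm_power)
  note q = circle_mean_ln_norm_denom[OF l2 c]
  { case 1 show ?case unfolding eq using Suc.IH(1) q(1) by auto }
  { case 2 show ?case unfolding eq using set_integral_add(2)[OF Suc.IH(1) q(1)] Suc.IH(2) q(2)
      by (simp add: algebra_simps) }
qed

lemma borel_measurable_log_norm_iter [measurable]: "log_norm_iter n \<in> borel_measurable borel"
proof -
  let ?M = "\<lambda>t. \<chi> i j. poly (numer_iter l1 l2 z (ecirc \<Phi>) n $ i $ j) (ecirc t)"
  let ?Q = "\<lambda>t. denom_iter l2 (ecirc \<Phi>) n (ecirc t)"
  have eq: "log_norm_iter n = (\<lambda>t. ln (cmod (inverse (?Q t)) * mnorm (?M t)))"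
    unfolding log_norm_iter_def UAMO_iter_eq_poly mnorm_cmult[symmetric]
    by (simp add: divide_inverse mult.commute)
  have [measurable]: "?M \<in> borel_measurable borel" "?Q \<in> borel_measurable borel"
    unfolding denom_iter_def by (intro borel_measurable_continuous_onI continuous_intros)+
  show ?thesis unfolding eq by measurable
qed

lemma log_norm_iter_integrable: "set_integrable lborel {0..1} (log_norm_iter n)"
proof -
  obtain K where K: "\<And>t. regular_angle t \<Longrightarrow> log_norm_iter n t \<le> K - log_denom n t"
    using log_norm_iter_le by blast
  let ?lo = "\<lambda>t. log_eig_poly n t - log_denom n t - ln (norm (eig_vec l1))"
  have "set_integrable lborel {0..1} ?lo" "set_integrable lborel {0..1} (\<lambda>t. K - log_denom n t)"
    using log_eig_poly_integral(1) log_denom_integral(1) set_integrable_const_unit_interval by auto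
  hence "set_integrable lborel {0..1} (\<lambda>t. \<bar>?lo t\<bar> + \<bar>K - log_denom n t\<bar>)"
    by (intro set_integral_add set_integrable_abs)
  thus ?thesis
  proof (rule set_integrable_bound)
    show "set_borel_measurable lborel {0..1} (log_norm_iter n)"
      unfolding set_borel_measurable_def by measurable
    show "AE t in lborel. t \<in> {0..1} \<longrightarrow> norm (log_norm_iter n t) \<le> norm (\<bar>?lo t\<bar> + \<bar>K - log_denom n t\<bar>)"
      using AE_regular_angle
    proof eventually_elim
      case (elim t)
      thus ?case using log_norm_iter_ge[where n=n, OF elim] K[OF elim] by auto
    qed
  qed
qed

lemma log_norm_iter_integral_ge:
  "real n * (ln (cmod (eig_val l1 l2)) - ln ((1 + lprime l2) / 2)) - ln (norm (eig_vec l1))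
     \<le> (LINT t:{0..1}|lborel. log_norm_iter n t)"
proof -
  let ?lo = "\<lambda>t. log_eig_poly n t - log_denom n t - ln (norm (eig_vec l1))"
  have lo: "set_integrable lborel {0..1} (\<lambda>t. log_eig_poly n t - log_denom n t)"
    using log_eig_poly_integral(1) log_denom_integral(1) by auto
  have "(LINT t:{0..1}|lborel. ?lo t) \<le> (LINT t:{0..1}|lborel. log_norm_iter n t)"
  proof (rule set_integral_mono_AE)
    show "set_integrable lborel {0..1} ?lo" using lo set_integrable_const_unit_interval by auto
    show "AE t\<in>{0..1} in lborel. ?lo t \<le> log_norm_iter n t"
      using AE_regular_angle by eventually_elim (use log_norm_iter_ge in auto)
  qed (rule log_norm_iter_integrable)
  moreover have "(LINT t:{0..1}|lborel. ?lo t)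
      = (LINT t:{0..1}|lborel. log_eig_poly n t) - real n * ln ((1 + lprime l2) / 2) - ln (norm (eig_vec l1))"
    using set_integral_diff(2)[OF lo set_integrable_const_unit_interval]
      set_integral_diff(2)[OF log_eig_poly_integral(1) log_denom_integral(1)] log_denom_integral(2) by simp
  ultimately show ?thesis using log_eig_poly_integral(2)[of n] by (simp add: algebra_simps)
qed

lemma log_norm_iter_add_le:
  assumes "regular_angle t"
  shows "log_norm_iter (n + m) t \<le> log_norm_iter m (t + real n * \<Phi>) + log_norm_iter n t"
proof -
  let ?X = "UAMO_iter l1 l2 \<Phi> z m (t + real n * \<Phi>)" and ?Y = "UAMO_iter l1 l2 \<Phi> z n t"
  have pos: "mnorm (UAMO_iter l1 l2 \<Phi> z (n + m) t) > 0" by (rule mnorm_iter_pos[OF assms])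
  have le: "mnorm (UAMO_iter l1 l2 \<Phi> z (n + m) t) \<le> mnorm ?X * mnorm ?Y"
    unfolding UAMO_iter_add by (rule mnorm_mult_le)
  hence prod: "0 < mnorm ?X * mnorm ?Y" using pos by linarith
  have "mnorm ?X > 0" using prod mnorm_nonneg[of ?X] by (metis less_eq_real_def mult_zero_left)
  moreover have "mnorm ?Y > 0" using prod mnorm_nonneg[of ?Y] by (metis less_eq_real_def mult_zero_right)
  ultimately show ?thesis unfolding log_norm_iter_def using le pos by (simp add: ln_mult_pos[symmetric])
qed

lemma log_norm_iter_integral_subadditive:
  "(LINT t:{0..1}|lborel. log_norm_iter (n + m) t)
     \<le> (LINT t:{0..1}|lborel. log_norm_iter m t) + (LINT t:{0..1}|lborel. log_norm_iter n t)"
proof -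
  have per: "log_norm_iter m (t + 1) = log_norm_iter m t" for t
    unfolding log_norm_iter_def UAMO_iter_eq_poly ecirc_add_1 ..
  note shift = set_integral_periodic_shift[OF per borel_measurable_log_norm_iter log_norm_iter_integrable,
      of "real n * \<Phi>"]
  have "(LINT t:{0..1}|lborel. log_norm_iter (n + m) t)
      \<le> (LINT t:{0..1}|lborel. log_norm_iter m (t + real n * \<Phi>) + log_norm_iter n t)"
  proof (rule set_integral_mono_AE)
    show "set_integrable lborel {0..1} (\<lambda>t. log_norm_iter m (t + real n * \<Phi>) + log_norm_iter n t)"
      using shift(1) log_norm_iter_integrable by auto
    show "AE t\<in>{0..1} in lborel. log_norm_iter (n + m) t \<le> log_norm_iter m (t + real n * \<Phi>) + log_norm_iter n t"
      using AE_regular_angle by eventually_elim (use log_norm_iter_add_le in auto)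
  qed (rule log_norm_iter_integrable)
  also have "\<dots> = (LINT t:{0..1}|lborel. log_norm_iter m t) + (LINT t:{0..1}|lborel. log_norm_iter n t)"
    using set_integral_add(2)[OF shift(1) log_norm_iter_integrable] shift(2) by simp
  finally show ?thesis .
qed

lemma lyap_ge: "lyap l1 l2 \<Phi> z \<ge> ln ((l2 * (1 + lprime l1)) / (l1 * (1 + lprime l2)))"
proof -
  define a where "a n = (LINT t:{0..1}|lborel. log_norm_iter n t)" for n
  have "ln (cmod (eig_val l1 l2)) - ln ((1 + lprime l2) / 2) \<le> lim (\<lambda>n. a n / n)"
    using log_norm_iter_integral_subadditive log_norm_iter_integral_ge unfolding a_def
    by (intro fekete_lower_bound(2)) (simp_all add: add.commute)
  moreover have "lyap l1 l2 \<Phi> z = lim (\<lambda>n. a n / n)"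
    unfolding lyap_def a_def log_norm_iter_def by simp
  ultimately show ?thesis using ln_norm_eig_val_diff[OF l1 l2] by simp
qed

end

lemma lyap_bound_pos:
  assumes "0 < l1" "l1 < l2" "l2 \<le> 1"
  shows "ln ((l2 * (1 + lprime l1)) / (l1 * (1 + lprime l2))) > 0"
proof -
  have "0 \<le> lprime l2" using assms by (intro lprime_nonneg) auto
  moreover have "lprime l2 < lprime l1" using assms by (intro lprime_strict_antimono) auto
  ultimately have "l1 * (1 + lprime l2) < l2 * (1 + lprime l1)"
    using assms by (smt (verit) mult_strict_mono)
  moreover have "0 < l1 * (1 + lprime l2)" using assms \<open>0 \<le> lprime l2\<close> by simp
  ultimately have "1 < (l2 * (1 + lprime l1)) / (l1 * (1 + lprime l2))" by (simp add: less_divide_eq)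
  thus ?thesis by simp
qed

lemma lyap_bound_tendsto:
  assumes "0 < l2" "l2 \<le> 1"
  shows "filterlim (\<lambda>l1. ln ((l2 * (1 + lprime l1)) / (l1 * (1 + lprime l2)))) at_top (at_right 0)"
proof (rule filterlim_at_top_mono)
  have "filterlim (\<lambda>x::real. l2 / 2 * inverse x) at_top (at_right 0)"
    using assms by (intro filterlim_tendsto_pos_mult_at_top[OF tendsto_const _ filterlim_inverse_at_top_right]) simp
  thus "filterlim (\<lambda>x::real. ln (l2 / 2 * inverse x)) at_top (at_right 0)"
    by (rule filterlim_compose[OF ln_at_top])
  show "\<forall>\<^sub>F x in at_right 0. ln (l2 / 2 * inverse x) \<le> ln ((l2 * (1 + lprime x)) / (x * (1 + lprime l2)))"
    using eventually_at_right_real[OF zero_less_one]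
  proof eventually_elim
    case (elim x)
    have "0 \<le> lprime x" "0 \<le> lprime l2" "lprime l2 \<le> 1"
      using elim assms lprime_nonneg lprime_le_1 by auto
    have "l2 / 2 * inverse x = l2 / (x * 2)" by (simp add: field_simps)
    also have "\<dots> \<le> l2 / (x * (1 + lprime l2))"
      using elim assms \<open>0 \<le> lprime l2\<close> \<open>lprime l2 \<le> 1\<close>
      by (intro divide_left_mono mult_left_mono mult_pos_pos) auto
    also have "\<dots> \<le> (l2 * (1 + lprime x)) / (x * (1 + lprime l2))"
      using elim assms \<open>0 \<le> lprime x\<close> \<open>0 \<le> lprime l2\<close> by (intro divide_right_mono) auto
    finally have "l2 / 2 * inverse x \<le> (l2 * (1 + lprime x)) / (x * (1 + lprime l2))" .
    thus ?case using elim assms by (intro ln_mono) auto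
  qed
qed

text \<open>The bound holds for every frequency \<open>\<Phi>\<close> and every \<open>z\<close> (for \<open>z = 0\<close> the junk value
  \<open>inverse 0 = 0\<close> is harmless), so neither the irrationality of \<open>\<Phi>\<close> nor \<open>z \<noteq> 0\<close> is used.\<close>
theorem theorem4p6:
  fixes \<Phi> :: real
  assumes "\<Phi> \<notin> \<rat>"
  shows "(\<forall>l1 l2 z. 0 < l1 \<and> l1 \<le> 1 \<and> 0 < l2 \<and> l2 \<le> 1 \<and> z \<noteq> 0 \<longrightarrow>
            lyap l1 l2 \<Phi> z \<ge> ln ((l2 * (1 + lprime l1)) / (l1 * (1 + lprime l2))))
       \<and> (\<forall>l1 l2 z. 0 < l1 \<and> l1 < l2 \<and> l2 \<le> 1 \<and> cmod z = 1 \<longrightarrow> lyap l1 l2 \<Phi> z > 0)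
       \<and> (\<forall>l2 z. 0 < l2 \<and> l2 \<le> 1 \<and> cmod z = 1 \<longrightarrow>
            filterlim (\<lambda>l1. lyap l1 l2 \<Phi> z) at_top (at_right 0))"
proof (intro conjI allI impI)
  fix l1 l2 :: real and z :: complex
  assume "0 < l1 \<and> l1 \<le> 1 \<and> 0 < l2 \<and> l2 \<le> 1 \<and> z \<noteq> 0"
  thus "lyap l1 l2 \<Phi> z \<ge> ln ((l2 * (1 + lprime l1)) / (l1 * (1 + lprime l2)))"
    using lyap_ge by blast
next
  fix l1 l2 :: real and z :: complex
  assume "0 < l1 \<and> l1 < l2 \<and> l2 \<le> 1 \<and> cmod z = 1"
  thus "lyap l1 l2 \<Phi> z > 0"
    using lyap_ge[of l1 l2 \<Phi> z] lyap_bound_pos[of l1 l2] by auto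
next
  fix l2 :: real and z :: complex
  assume l2: "0 < l2 \<and> l2 \<le> 1 \<and> cmod z = 1"
  have "\<forall>\<^sub>F l1 in at_right 0. ln ((l2 * (1 + lprime l1)) / (l1 * (1 + lprime l2))) \<le> lyap l1 l2 \<Phi> z"
    using eventually_at_right_real[OF zero_less_one] by eventually_elim (use l2 lyap_ge in auto)
  with lyap_bound_tendsto show "filterlim (\<lambda>l1. lyap l1 l2 \<Phi> z) at_top (at_right 0)"
    using l2 by (blast intro: filterlim_at_top_mono)
qed

end
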